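(* Assume the following setting. For each $n$, $X\in\mathbb{R}^{n\times e}$ is deterministic with rows $x_i$; $\Gamma\in\mathbb{R}^{e\times p}$, $\sigma^2>0$, $\sigma_z^2>0$, $e,p$ are fixed; $\lambda\ge0$ and $\beta_0\in\mathbb{R}^e$ depend on $n$. Let $y=X\beta_0+\epsilon$, $Z=X\Gamma+E$, with entries of $E$ i.i.d. $N(0,\sigma_z^2)$, entries of $\epsilon$ i.i.d. $N(0,\sigma^2)$, $E,\epsilon$ independent. Assume as $n\to\infty$: $\lambda/n\to\kappa\ge0$; $\sqrt n\beta_0\to\alpha_0$; $\frac1nX^TX\to\Sigma$ positive definite; $\frac1n\mathbf{1}^TX\to\Theta\in\mathbb{R}^{1\times e}$; $\max_i\|x_i\|=o(n^{1/3})$. Let $\tilde Z=[\mathbf{1},Z]$ with rows $\tilde Z_i$, and let $\tilde Z_{(i)}$, $\epsilon_{(i)}$ denote $\tilde Z$, $\epsilon$ with the $i$-th row (entry) removed. Define $H_i:=\tilde Z_i(\tilde Z_{(i)}^T\tilde Z_{(i)}+\lambda I)^{-1}\tilde Z_{(i)}^T$, $\delta_i:=H_i\epsilon_{(i)}$, $\delta=(\delta_1,\dots,\delta_n)^T$, and $\delta':=\tilde Z(\tilde Z^T\tilde Z+\lambda I)^{-1}\tilde Z^T\epsilon$. Then $\|\delta-\delta'\|=o_P(1)$ as $n\to\infty$.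
   Context: $\|\cdot\|$ is the Euclidean norm; $I$ is the $(p+1)\times(p+1)$ identity. *)

theory Defs
  imports "HOL-Probability.Probability" "HOL-Library.Landau_Symbols"
begin

text \<open>Gram matrix  sum over j in S of z_j z_j^T  (= Z_S^T Z_S where Z_S has rows z_j, j in S).\<close>
definition gram :: "(nat \<Rightarrow> real^'k) \<Rightarrow> nat set \<Rightarrow> real^'k^'k" where
  "gram z S = (\<chi> a b. \<Sum>j\<in>S. z j $ a * z j $ b)"

text \<open>Z_S^T v_S = sum over j in S of v_j z_j.\<close>
definition cross :: "(nat \<Rightarrow> real^'k) \<Rightarrow> (nat \<Rightarrow> real) \<Rightarrow> nat set \<Rightarrow> real^'k" where
  "cross z v S = (\<Sum>j\<in>S. v j *\<^sub>R z j)"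

definition pos_def :: "real^'k^'k \<Rightarrow> bool" where
  "pos_def S \<longleftrightarrow> transpose S = S \<and> (\<forall>v. v \<noteq> 0 \<longrightarrow> v \<bullet> (S *v v) > 0)"

text \<open>Row i of Z~ = [1, Z]: index None is the intercept column, Some k is column k of Z = X Gamma + E.\<close>
definition ztilde :: "real^'p^'e \<Rightarrow> (nat \<Rightarrow> real^'e) \<Rightarrow> (nat \<Rightarrow> 'p \<Rightarrow> real) \<Rightarrow> nat \<Rightarrow> real^('p option)" where
  "ztilde Gam x Emat i = (\<chi> k. case k of None \<Rightarrow> 1 | Some k' \<Rightarrow> (transpose Gam *v x i) $ k' + Emat i k')"

definition delta_loo :: "(nat \<Rightarrow> real^'k) \<Rightarrow> (nat \<Rightarrow> real) \<Rightarrow> real \<Rightarrow> nat \<Rightarrow> nat \<Rightarrow> real" where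
  "delta_loo z v lam n i = z i \<bullet> (matrix_inv (gram z ({..<n} - {i}) + lam *\<^sub>R mat 1) *v cross z v ({..<n} - {i}))"

definition delta_full :: "(nat \<Rightarrow> real^'k) \<Rightarrow> (nat \<Rightarrow> real) \<Rightarrow> real \<Rightarrow> nat \<Rightarrow> nat \<Rightarrow> real" where
  "delta_full z v lam n i = z i \<bullet> (matrix_inv (gram z {..<n} + lam *\<^sub>R mat 1) *v cross z v {..<n})"

text \<open>Index set and family of all noise variables at sample size n: entries of E (n x p) and of eps (n).\<close>
definition noise_index :: "nat \<Rightarrow> ((nat \<times> 'p) + nat) set" where
  "noise_index n = Inl ` ({..<n} \<times> UNIV) \<union> Inr ` {..<n}"

definition noise_family :: "(nat \<Rightarrow> nat \<Rightarrow> 'p \<Rightarrow> 'w \<Rightarrow> real) \<Rightarrow> (nat \<Rightarrow> nat \<Rightarrow> 'w \<Rightarrow> real) \<Rightarrow> nat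
    \<Rightarrow> ((nat \<times> 'p) + nat) \<Rightarrow> 'w \<Rightarrow> real" where
  "noise_family E eps n j = (case j of Inl (i, k) \<Rightarrow> E n i k | Inr i \<Rightarrow> eps n i)"

end

(* Write A = Z~^T Z~ + lam I and s = A^-1 Z~^T eps for the full ridge fit. Removing the row z_i
   turns A into A_(i) = A - z_i z_i^T, and comparing the normal equations gives
   delta_i - delta'_i = (z_i . s - eps_i) * z_i^T A_(i)^-1 z_i.
   If Z~^T Z~ >= c n I and max_i |z_i|^2 = o(n), then also A_(i) >= c n I / 2, all leverages
   z_i^T A_(i)^-1 z_i are o(1), and sum_i (z_i . s)^2 <= s . A s = s . Z~^T eps <= |Z~^T eps|^2 / (c n).
   Since |Z~^T eps|^2 and sum_i eps_i^2 |z_i|^2 are O(n), this yields |delta - delta'|^2 = o(1).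
   The three hypotheses hold with probability tending to one: Chebyshev bounds on the empirical
   moments of the Gaussian noise E show that the Gram matrix of the augmented design [1, X Gam + E]
   is of order n, a fourth moment union bound controls max_{i,k} E_ik^2 (so max_i |x_i| = o(sqrt n)
   would suffice), and the two O(n) bounds follow from Markov's inequality. *)

theory Submission
  imports Defs
begin

section \<open>Leave-one-out ridge fits\<close>

lemma gram_mult_vec: "gram z S *v u = (\<Sum>j\<in>S. (z j \<bullet> u) *\<^sub>R z j)"
proof -
  have "(gram z S *v u) $ a = (\<Sum>j\<in>S. (z j \<bullet> u) *\<^sub>R z j) $ a" for a
  proof -
    have "(gram z S *v u) $ a = (\<Sum>b\<in>UNIV. (\<Sum>j\<in>S. z j $ a * z j $ b) * u $ b)"
      by (simp add: matrix_vector_mult_def gram_def)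
    also have "\<dots> = (\<Sum>j\<in>S. \<Sum>b\<in>UNIV. z j $ a * (z j $ b * u $ b))"
      by (simp add: sum_distrib_right sum.swap[of _ UNIV] mult.assoc)
    also have "\<dots> = (\<Sum>j\<in>S. (z j \<bullet> u) *\<^sub>R z j) $ a"
      by (simp add: inner_vec_def sum_distrib_left mult.commute sum_component)
    finally show ?thesis .
  qed
  then show ?thesis by (simp add: vec_eq_iff)
qed

lemma inner_gram_mult_vec: "u \<bullet> (gram z S *v u) = (\<Sum>j\<in>S. (z j \<bullet> u)\<^sup>2)"
  by (simp add: gram_mult_vec inner_sum_right power2_eq_square inner_commute)

lemma gram_remove_mult_vec:
  "finite S \<Longrightarrow> i \<in> S \<Longrightarrow> gram z (S - {i}) *v u = gram z S *v u - (z i \<bullet> u) *\<^sub>R z i"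
  by (simp add: gram_mult_vec sum_diff1)

lemma cross_remove: "finite S \<Longrightarrow> i \<in> S \<Longrightarrow> cross z v (S - {i}) = cross z v S - v i *\<^sub>R z i"
  by (simp add: cross_def sum_diff1)

lemma ridge_mult_vec: "(G + lam *\<^sub>R mat 1) *v u = G *v u + lam *\<^sub>R (u::real^'k)"
  by (simp add: matrix_vector_mult_add_rdistrib)
    (metis matrix_scaleR_vector_ac matrix_vector_mul_lid)

lemma matrix_inv_coercive:
  fixes A :: "real^'k^'k"
  assumes m: "m > 0" and coercive: "\<And>u. m * (norm u)\<^sup>2 \<le> u \<bullet> (A *v u)"
  shows "A *v (matrix_inv A *v y) = y" "matrix_inv A *v (A *v x) = x"
    "norm (matrix_inv A *v y) \<le> norm y / m"
proof -
  have "\<forall>x. A *v x = 0 \<longrightarrow> x = 0"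
  proof (intro allI impI)
    fix x assume "A *v x = 0"
    then have "m * (norm x)\<^sup>2 \<le> 0"
      using coercive[of x] by simp
    then show "x = 0"
      using m by (simp add: mult_le_0_iff)
  qed
  then obtain B where B: "B ** A = mat 1"
    using matrix_left_invertible_ker by blast
  then have "\<exists>A'. A ** A' = mat 1 \<and> A' ** A = mat 1"
    using matrix_left_right_inverse by blast
  then have inv: "A ** matrix_inv A = mat 1" "matrix_inv A ** A = mat 1"
    unfolding matrix_inv_def by (metis (mono_tags, lifting) someI_ex)+
  show right: "A *v (matrix_inv A *v y) = y" for y
    by (simp add: matrix_vector_mul_assoc inv)
  show "matrix_inv A *v (A *v x) = x"
    by (simp add: matrix_vector_mul_assoc inv)
  let ?x = "matrix_inv A *v y"
  have "m * (norm ?x)\<^sup>2 \<le> ?x \<bullet> y"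
    using coercive[of ?x] right[of y] by simp
  also have "\<dots> \<le> norm ?x * norm y"
    by (rule norm_cauchy_schwarz)
  finally have "m * norm ?x * norm ?x \<le> norm y * norm ?x"
    by (simp add: power2_eq_square ac_simps)
  then show "norm ?x \<le> norm y / m"
    using m by (cases "norm ?x = 0") (simp_all add: field_simps)
qed

text \<open>Removing the rank-one term \<open>z\<^sub>i z\<^sub>i\<^sup>T\<close> from the regularised Gram matrix \<open>A\<close>
  (the Sherman--Morrison situation): \<open>A\<^sub>(\<^sub>i\<^sub>) (s\<^sub>(\<^sub>i\<^sub>) - s) = (z\<^sub>i \<bullet> s - v\<^sub>i) z\<^sub>i\<close>.\<close>
lemma delta_loo_minus_delta_full:
  fixes z :: "nat \<Rightarrow> real^'k" and lam :: real and n i :: nat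
  defines "A \<equiv> gram z {..<n} + lam *\<^sub>R mat 1" and "A\<^sub>i \<equiv> gram z ({..<n} - {i}) + lam *\<^sub>R mat 1"
  assumes i: "i < n" and m: "m > 0" and coercive: "\<And>u. m * (norm u)\<^sup>2 \<le> u \<bullet> (A\<^sub>i *v u)"
  shows "delta_loo z v lam n i - delta_full z v lam n i
    = (z i \<bullet> (matrix_inv A *v cross z v {..<n}) - v i) * (z i \<bullet> (matrix_inv A\<^sub>i *v z i))"
proof -
  define c where "c = cross z v {..<n}"
  define s where "s = matrix_inv A *v c"
  define s\<^sub>i where "s\<^sub>i = matrix_inv A\<^sub>i *v cross z v ({..<n} - {i})"
  have fin: "finite {..<n}" "i \<in> {..<n}" using i by auto
  have A_split: "A *v u = A\<^sub>i *v u + (z i \<bullet> u) *\<^sub>R z i" for u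
    by (simp add: A_def A\<^sub>i_def ridge_mult_vec gram_remove_mult_vec[OF fin])
  have "m * (norm u)\<^sup>2 \<le> u \<bullet> (A *v u)" for u
    using coercive[of u] by (simp add: A_split inner_add_right inner_commute[of u] power2_eq_square add_increasing2)
  then have "A *v s = c"
    unfolding s_def using matrix_inv_coercive(1) m by blast
  then have "A\<^sub>i *v s = c - (z i \<bullet> s) *\<^sub>R z i"
    by (simp add: A_split algebra_simps)
  moreover have "A\<^sub>i *v s\<^sub>i = c - v i *\<^sub>R z i"
    unfolding s\<^sub>i_def c_def cross_remove[OF fin] by (rule matrix_inv_coercive(1)[OF m coercive])
  ultimately have "A\<^sub>i *v (s\<^sub>i - s) = (z i \<bullet> s - v i) *\<^sub>R z i"
    by (simp add: matrix_vector_mult_diff_distrib algebra_simps)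
  then have "s\<^sub>i - s = (z i \<bullet> s - v i) *\<^sub>R (matrix_inv A\<^sub>i *v z i)"
    by (metis matrix_inv_coercive(2)[OF m coercive] matrix_vector_mult_scaleR)
  moreover have "delta_loo z v lam n i - delta_full z v lam n i = z i \<bullet> (s\<^sub>i - s)"
    by (simp add: delta_loo_def delta_full_def s\<^sub>i_def s_def A\<^sub>i_def A_def c_def inner_diff_right)
  ultimately show ?thesis
    by (simp add: s_def c_def)
qed

lemma inner_ridge_mult_vec: "u \<bullet> ((G + lam *\<^sub>R mat 1) *v u) = u \<bullet> (G *v u) + lam * (norm (u::real^'k))\<^sup>2"
  by (simp add: ridge_mult_vec inner_add_right power2_norm_eq_inner)

lemma ridge_coercive:
  fixes u :: "real^'k"
  assumes "\<And>u. m * (norm u)\<^sup>2 \<le> u \<bullet> (G *v u)" and "lam \<ge> 0"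
  shows "m * (norm u)\<^sup>2 \<le> u \<bullet> ((G + lam *\<^sub>R mat 1) *v u)"
  using assms(1)[of u] mult_nonneg_nonneg[OF assms(2) zero_le_power2[of "norm u"]]
  unfolding inner_ridge_mult_vec by linarith

lemma gram_remove_coercive:
  assumes gram_ge: "\<And>u. 2 * m * (norm u)\<^sup>2 \<le> u \<bullet> (gram z S *v u)"
    and "finite S" "i \<in> S" and row: "(norm (z i))\<^sup>2 \<le> m"
  shows "m * (norm u)\<^sup>2 \<le> u \<bullet> (gram z (S - {i}) *v u)"
proof -
  have "(z i \<bullet> u)\<^sup>2 \<le> (norm (z i))\<^sup>2 * (norm u)\<^sup>2"
    by (metis Cauchy_Schwarz_ineq2 abs_ge_zero power2_abs power_mono power_mult_distrib)
  also have "\<dots> \<le> m * (norm u)\<^sup>2"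
    using row by (intro mult_right_mono) auto
  finally show ?thesis
    using gram_ge[of u] assms(2,3)
    by (simp add: gram_remove_mult_vec inner_diff_right inner_commute[of u "z i"] power2_eq_square)
qed

text \<open>The fitted values \<open>z\<^sub>i \<bullet> s\<close> of a ridge fit are controlled through \<open>s \<bullet> A s = s \<bullet> c\<close>.\<close>
lemma sum_sq_ridge_fitted_le:
  fixes z :: "nat \<Rightarrow> real^'k" and c :: "real^'k"
  assumes m: "m > 0" and gram_ge: "\<And>u. m * (norm u)\<^sup>2 \<le> u \<bullet> (gram z {..<n} *v u)" and lam: "lam \<ge> 0"
  defines "s \<equiv> matrix_inv (gram z {..<n} + lam *\<^sub>R mat 1) *v c"
  shows "(\<Sum>i<n. (z i \<bullet> s)\<^sup>2) \<le> (norm c)\<^sup>2 / m"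
proof -
  note coercive = ridge_coercive[OF gram_ge lam]
  have "(\<Sum>i<n. (z i \<bullet> s)\<^sup>2) \<le> s \<bullet> ((gram z {..<n} + lam *\<^sub>R mat 1) *v s)"
    using lam by (simp add: inner_ridge_mult_vec inner_gram_mult_vec)
  also have "\<dots> = s \<bullet> c"
    unfolding s_def by (simp add: matrix_inv_coercive(1)[OF m coercive])
  also have "\<dots> \<le> norm s * norm c"
    by (rule norm_cauchy_schwarz)
  also have "\<dots> \<le> norm c / m * norm c"
    unfolding s_def by (intro mult_right_mono matrix_inv_coercive(3)[OF m coercive]) simp
  finally show ?thesis
    by (simp add: power2_eq_square)
qed

lemma square_diff_le: "((a::real) - b)\<^sup>2 \<le> 2 * a\<^sup>2 + 2 * b\<^sup>2"
  using zero_le_power2[of "a + b"] unfolding power2_diff power2_sum by linarith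

lemma delta_loo_minus_delta_full_sq_le:
  fixes z :: "nat \<Rightarrow> real^'k" and v :: "nat \<Rightarrow> real"
  assumes lam: "lam \<ge> 0" and m: "m > 0" and i: "i < n"
    and gram_ge: "\<And>u. 2 * m * (norm u)\<^sup>2 \<le> u \<bullet> (gram z {..<n} *v u)"
    and row: "(norm (z i))\<^sup>2 \<le> D" and "D \<le> m"
  defines "s \<equiv> matrix_inv (gram z {..<n} + lam *\<^sub>R mat 1) *v cross z v {..<n}"
  shows "(delta_loo z v lam n i - delta_full z v lam n i)\<^sup>2
    \<le> 2 * (D / m)\<^sup>2 * (z i \<bullet> s)\<^sup>2 + 2 * D / m\<^sup>2 * ((v i)\<^sup>2 * (norm (z i))\<^sup>2)"
proof -
  define A\<^sub>i where "A\<^sub>i = gram z ({..<n} - {i}) + lam *\<^sub>R mat 1"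
  define g where "g = z i \<bullet> (matrix_inv A\<^sub>i *v z i)"
  have "m * (norm u)\<^sup>2 \<le> u \<bullet> (gram z ({..<n} - {i}) *v u)" for u
    using row \<open>D \<le> m\<close> i by (intro gram_remove_coercive[OF gram_ge]) auto
  then have coercive: "m * (norm u)\<^sup>2 \<le> u \<bullet> (A\<^sub>i *v u)" for u
    unfolding A\<^sub>i_def using lam by (rule ridge_coercive)
  have "\<bar>g\<bar> \<le> norm (z i) * norm (matrix_inv A\<^sub>i *v z i)"
    unfolding g_def by (rule Cauchy_Schwarz_ineq2)
  also have "\<dots> \<le> norm (z i) * (norm (z i) / m)"
    by (intro mult_left_mono matrix_inv_coercive(3)[OF m coercive]) auto
  finally have g_le: "\<bar>g\<bar> \<le> (norm (z i))\<^sup>2 / m"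
    by (simp add: power2_eq_square)
  then have g_le_D: "\<bar>g\<bar> \<le> D / m"
    using row m by (smt (verit) divide_right_mono)
  have "\<bar>g\<bar> * \<bar>g\<bar> \<le> D / m * ((norm (z i))\<^sup>2 / m)"
    using g_le g_le_D by (intro mult_mono) auto
  then have g2: "g\<^sup>2 \<le> (D / m)\<^sup>2" "g\<^sup>2 \<le> D / m * ((norm (z i))\<^sup>2 / m)"
    using power_mono[OF g_le_D, of 2] by (simp_all add: power2_eq_square)
  have "(delta_loo z v lam n i - delta_full z v lam n i)\<^sup>2 = (z i \<bullet> s - v i)\<^sup>2 * g\<^sup>2"
    unfolding delta_loo_minus_delta_full[OF i m coercive[unfolded A\<^sub>i_def]] g_def A\<^sub>i_def s_def
    by (simp add: power_mult_distrib)
  also have "\<dots> \<le> (2 * (z i \<bullet> s)\<^sup>2 + 2 * (v i)\<^sup>2) * g\<^sup>2"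
    by (intro mult_right_mono square_diff_le) simp
  also have "\<dots> \<le> 2 * (z i \<bullet> s)\<^sup>2 * (D / m)\<^sup>2 + 2 * (v i)\<^sup>2 * (D / m * ((norm (z i))\<^sup>2 / m))"
    unfolding distrib_right using g2 by (intro add_mono mult_left_mono) simp_all
  finally show ?thesis
    by (simp add: power2_eq_square field_simps)
qed

lemma sum_sq_delta_loo_minus_delta_full_le:
  fixes z :: "nat \<Rightarrow> real^'k"
  assumes lam: "lam \<ge> 0" and m: "m > 0"
    and gram_ge: "\<And>u. 2 * m * (norm u)\<^sup>2 \<le> u \<bullet> (gram z {..<n} *v u)"
    and rows: "\<And>i. i < n \<Longrightarrow> (norm (z i))\<^sup>2 \<le> D" and "D \<le> m"
  shows "(\<Sum>i<n. (delta_loo z v lam n i - delta_full z v lam n i)\<^sup>2)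
    \<le> 2 * (D / m)\<^sup>2 * (norm (cross z v {..<n}))\<^sup>2 / m + 2 * D / m\<^sup>2 * (\<Sum>i<n. (v i)\<^sup>2 * (norm (z i))\<^sup>2)"
proof -
  define s where "s = matrix_inv (gram z {..<n} + lam *\<^sub>R mat 1) *v cross z v {..<n}"
  have "(\<Sum>i<n. (delta_loo z v lam n i - delta_full z v lam n i)\<^sup>2)
      \<le> (\<Sum>i<n. 2 * (D / m)\<^sup>2 * (z i \<bullet> s)\<^sup>2 + 2 * D / m\<^sup>2 * ((v i)\<^sup>2 * (norm (z i))\<^sup>2))"
    unfolding s_def using rows \<open>D \<le> m\<close> by (intro sum_mono delta_loo_minus_delta_full_sq_le[OF lam m _ gram_ge]) auto
  also have "\<dots> = 2 * (D / m)\<^sup>2 * (\<Sum>i<n. (z i \<bullet> s)\<^sup>2) + 2 * D / m\<^sup>2 * (\<Sum>i<n. (v i)\<^sup>2 * (norm (z i))\<^sup>2)"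
    by (simp add: sum.distrib sum_distrib_left)
  also have "(\<Sum>i<n. (z i \<bullet> s)\<^sup>2) \<le> (norm (cross z v {..<n}))\<^sup>2 / m"
    unfolding s_def using m lam gram_ge
    by (intro sum_sq_ridge_fitted_le) (smt (verit) mult_right_mono zero_le_power2)+
  finally show ?thesis
    by (simp add: mult_left_mono divide_right_mono)
qed

lemma sum_sq_delta_loo_minus_delta_full_le_scaled:
  fixes z :: "nat \<Rightarrow> real^'k"
  assumes lam: "lam \<ge> 0" and \<mu>: "\<mu> > 0" and n: "n > 0"
    and gram_ge: "\<And>u. \<mu> * real n * (norm u)\<^sup>2 \<le> u \<bullet> (gram z {..<n} *v u)"
    and rows: "\<And>i. i < n \<Longrightarrow> (norm (z i))\<^sup>2 \<le> d * real n" and d: "d \<le> \<mu> / 2" "d \<le> 1"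
    and cross: "(norm (cross z v {..<n}))\<^sup>2 \<le> K * real n"
    and weighted: "(\<Sum>i<n. (v i)\<^sup>2 * (norm (z i))\<^sup>2) \<le> K * real n"
  shows "(\<Sum>i<n. (delta_loo z v lam n i - delta_full z v lam n i)\<^sup>2) \<le> d * (16 * K / \<mu> ^ 3 + 8 * K / \<mu>\<^sup>2)"
proof -
  define m where "m = \<mu> * real n / 2"
  have m: "m > 0"
    using \<mu> n by (simp add: m_def)
  have "0 \<le> d * real n"
    using rows[of 0] n by (meson order_trans zero_le_power2)
  then have d0: "0 \<le> d"
    using n by (simp add: zero_le_mult_iff)
  have "(\<Sum>i<n. (delta_loo z v lam n i - delta_full z v lam n i)\<^sup>2)
      \<le> 2 * (d * real n / m)\<^sup>2 * (norm (cross z v {..<n}))\<^sup>2 / m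
        + 2 * (d * real n) / m\<^sup>2 * (\<Sum>i<n. (v i)\<^sup>2 * (norm (z i))\<^sup>2)"
    using gram_ge d \<mu> n by (intro sum_sq_delta_loo_minus_delta_full_le[OF lam m _ rows]) (auto simp: m_def)
  also have "\<dots> \<le> 2 * (d * real n / m)\<^sup>2 * (K * real n) / m + 2 * (d * real n) / m\<^sup>2 * (K * real n)"
    using cross weighted m d0 by (intro add_mono divide_right_mono mult_left_mono) auto
  also have "\<dots> = 16 * d\<^sup>2 * K / \<mu> ^ 3 + 8 * d * K / \<mu>\<^sup>2"
    using \<mu> n by (simp add: m_def field_simps power2_eq_square power3_eq_cube)
  also have "\<dots> \<le> d * (16 * K / \<mu> ^ 3 + 8 * K / \<mu>\<^sup>2)"
  proof -
    have "0 \<le> K * real n"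
      using weighted by (meson order_trans sum_nonneg mult_nonneg_nonneg zero_le_power2)
    then have "K \<ge> 0"
      using n by (simp add: zero_le_mult_iff)
    then have "d\<^sup>2 * K \<le> d * K"
      using d d0 by (intro mult_right_mono) (auto simp: power2_eq_square mult_left_le_one_le)
    then show ?thesis
      using \<mu> by (simp add: algebra_simps divide_right_mono)
  qed
  finally show ?thesis .
qed

section \<open>The Gram matrix of the augmented design\<close>

lemma sum_UNIV_option: "(\<Sum>a\<in>(UNIV::'a::finite option set). f a) = f None + (\<Sum>k\<in>UNIV. f (Some k))"
proof -
  have "(\<Sum>a\<in>(UNIV::'a option set). f a) = f None + (\<Sum>a\<in>range Some. f a)"
    by (simp add: UNIV_option_conv)
  also have "(\<Sum>a\<in>range Some. f a) = (\<Sum>k\<in>UNIV. f (Some k))"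
    by (subst sum.reindex) (auto simp: inj_on_def)
  finally show ?thesis .
qed

lemma norm_squared_vec: "(norm (x::real^'k))\<^sup>2 = (\<Sum>a\<in>UNIV. (x $ a)\<^sup>2)"
  unfolding power2_norm_eq_inner by (simp add: inner_vec_def power2_eq_square)

lemma abs_sum_le_card_mult:
  assumes "\<And>k. k \<in> A \<Longrightarrow> \<bar>f k\<bar> \<le> (c::real)"
  shows "\<bar>\<Sum>k\<in>A. f k\<bar> \<le> real (card A) * c"
  using order_trans[OF sum_abs sum_bounded_above[of A "\<lambda>k. \<bar>f k\<bar>"]] assms by simp

lemma abs_double_sum_le_card_mult:
  assumes "\<And>k l. k \<in> A \<Longrightarrow> l \<in> B \<Longrightarrow> \<bar>f k l\<bar> \<le> (c::real)"
  shows "\<bar>\<Sum>k\<in>A. \<Sum>l\<in>B. f k l\<bar> \<le> real (card A) * real (card B) * c"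
proof -
  have "\<bar>\<Sum>k\<in>A. \<Sum>l\<in>B. f k l\<bar> \<le> real (card A) * (real (card B) * c)"
    using assms by (intro abs_sum_le_card_mult) auto
  then show ?thesis
    by (simp add: mult.assoc)
qed

lemma sum_sq_affine_ge:
  fixes w :: "nat \<Rightarrow> 'p::finite \<Rightarrow> real"
  shows "real n * c\<^sup>2 / 2 - (\<Sum>i<n. \<Sum>k\<in>UNIV. (w i k)\<^sup>2) * (\<Sum>k\<in>UNIV. (u k)\<^sup>2)
    \<le> (\<Sum>i<n. (c + (\<Sum>k\<in>UNIV. w i k * u k))\<^sup>2)"
proof -
  have "c\<^sup>2 / 2 - (\<Sum>k\<in>UNIV. (w i k)\<^sup>2) * (\<Sum>k\<in>UNIV. (u k)\<^sup>2) \<le> (c + (\<Sum>k\<in>UNIV. w i k * u k))\<^sup>2" for i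
  proof -
    have "c\<^sup>2 / 2 - (\<Sum>k\<in>UNIV. w i k * u k)\<^sup>2 \<le> (c + (\<Sum>k\<in>UNIV. w i k * u k))\<^sup>2"
      using zero_le_power2[of "c + 2 * (\<Sum>k\<in>UNIV. w i k * u k)"]
      by (simp add: power2_sum power2_eq_square algebra_simps)
    then show ?thesis
      using Cauchy_Schwarz_ineq_sum[of "w i" u UNIV] by linarith
  qed
  then have "(\<Sum>i<n. c\<^sup>2 / 2 - (\<Sum>k\<in>UNIV. (w i k)\<^sup>2) * (\<Sum>k\<in>UNIV. (u k)\<^sup>2))
      \<le> (\<Sum>i<n. (c + (\<Sum>k\<in>UNIV. w i k * u k))\<^sup>2)"
    by (intro sum_mono)
  then show ?thesis
    by (simp add: sum_subtractf sum_distrib_right)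
qed

lemma sum_sq_noise_form_ge:
  fixes e :: "nat \<Rightarrow> 'p::finite \<Rightarrow> real"
  assumes cov: "\<And>k l. \<bar>\<Sum>i<n. (e i k * e i l - (if k = l then \<sigma> else 0))\<bar> \<le> \<delta> * real n"
    and u: "\<And>k l. \<bar>u k * u l\<bar> \<le> N"
  shows "\<sigma> * real n * (\<Sum>k\<in>UNIV. (u k)\<^sup>2) - (real CARD('p))\<^sup>2 * (\<delta> * real n) * N
    \<le> (\<Sum>i<n. (\<Sum>k\<in>UNIV. e i k * u k)\<^sup>2)"
proof -
  define D where "D k l = (\<Sum>i<n. (e i k * e i l - (if k = l then \<sigma> else 0)))" for k l
  have "(\<Sum>i<n. (\<Sum>k\<in>UNIV. e i k * u k)\<^sup>2) = (\<Sum>k\<in>UNIV. \<Sum>l\<in>UNIV. u k * u l * (\<Sum>i<n. e i k * e i l))"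
    by (simp add: power2_eq_square sum_product sum_distrib_left sum.swap[of _ "{..<n}"] algebra_simps)
  also have "\<dots> = (\<Sum>k\<in>UNIV. \<Sum>l\<in>UNIV. u k * u l * ((if k = l then \<sigma> * real n else 0) + D k l))"
    unfolding D_def by (intro sum.cong refl) (simp add: sum_subtractf)
  also have "\<dots> = (\<Sum>k\<in>UNIV. \<Sum>l\<in>UNIV. u k * u l * (if k = l then \<sigma> * real n else 0))
      + (\<Sum>k\<in>UNIV. \<Sum>l\<in>UNIV. u k * u l * D k l)"
    by (simp add: distrib_left sum.distrib)
  also have "(\<Sum>k\<in>UNIV. \<Sum>l\<in>UNIV. u k * u l * (if k = l then \<sigma> * real n else 0))
      = \<sigma> * real n * (\<Sum>k\<in>UNIV. (u k)\<^sup>2)"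
    by (simp add: sum_distrib_left power2_eq_square algebra_simps if_distrib sum.delta cong: if_cong)
  finally have eq: "(\<Sum>i<n. (\<Sum>k\<in>UNIV. e i k * u k)\<^sup>2)
      = \<sigma> * real n * (\<Sum>k\<in>UNIV. (u k)\<^sup>2) + (\<Sum>k\<in>UNIV. \<Sum>l\<in>UNIV. u k * u l * D k l)" .
  have "\<bar>\<Sum>k\<in>UNIV. \<Sum>l\<in>UNIV. u k * u l * D k l\<bar> \<le> real CARD('p) * real CARD('p) * (N * (\<delta> * real n))"
  proof (rule abs_double_sum_le_card_mult)
    fix k l
    show "\<bar>u k * u l * D k l\<bar> \<le> N * (\<delta> * real n)"
      unfolding abs_mult[of "u k * u l"] D_def using u[of k l] cov[of k l] by (intro mult_mono) auto
  qed
  then show ?thesis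
    unfolding eq by (simp add: power2_eq_square mult_ac)
qed

lemma cross_term_le:
  fixes w e :: "nat \<Rightarrow> 'p::finite \<Rightarrow> real"
  assumes sum_e: "\<And>k. \<bar>\<Sum>i<n. e i k\<bar> \<le> \<delta> * real n"
    and sum_we: "\<And>k l. \<bar>\<Sum>i<n. w i k * e i l\<bar> \<le> \<delta> * real n"
    and uc: "\<And>k. \<bar>u k * c\<bar> \<le> N" and uu: "\<And>k l. \<bar>u k * u l\<bar> \<le> N"
  shows "\<bar>\<Sum>i<n. (c + (\<Sum>k\<in>UNIV. w i k * u k)) * (\<Sum>k\<in>UNIV. e i k * u k)\<bar>
    \<le> (real CARD('p) + (real CARD('p))\<^sup>2) * (\<delta> * real n) * N"
proof -
  have "(\<Sum>i<n. (c + (\<Sum>k\<in>UNIV. w i k * u k)) * (\<Sum>k\<in>UNIV. e i k * u k))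
      = (\<Sum>k\<in>UNIV. u k * c * (\<Sum>i<n. e i k))
        + (\<Sum>k\<in>UNIV. \<Sum>l\<in>UNIV. u k * u l * (\<Sum>i<n. w i k * e i l))"
    by (simp add: distrib_right sum.distrib sum_product sum_distrib_left sum.swap[of _ "{..<n}"] algebra_simps)
  moreover have "\<bar>\<Sum>k\<in>UNIV. u k * c * (\<Sum>i<n. e i k)\<bar> \<le> real CARD('p) * (N * (\<delta> * real n))"
  proof (rule abs_sum_le_card_mult)
    fix k
    show "\<bar>u k * c * (\<Sum>i<n. e i k)\<bar> \<le> N * (\<delta> * real n)"
      unfolding abs_mult[of "u k * c"] using uc[of k] sum_e[of k] by (intro mult_mono) auto
  qed
  moreover have "\<bar>\<Sum>k\<in>UNIV. \<Sum>l\<in>UNIV. u k * u l * (\<Sum>i<n. w i k * e i l)\<bar>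
      \<le> real CARD('p) * real CARD('p) * (N * (\<delta> * real n))"
  proof (rule abs_double_sum_le_card_mult)
    fix k l
    show "\<bar>u k * u l * (\<Sum>i<n. w i k * e i l)\<bar> \<le> N * (\<delta> * real n)"
      unfolding abs_mult[of "u k * u l"] using uu[of k l] sum_we[of k l] by (intro mult_mono) auto
  qed
  ultimately show ?thesis
    by (simp add: power2_eq_square algebra_simps)
qed

definition noise_concentrated :: "nat \<Rightarrow> real \<Rightarrow> real \<Rightarrow> (nat \<Rightarrow> 'p::finite \<Rightarrow> real) \<Rightarrow> (nat \<Rightarrow> 'p \<Rightarrow> real) \<Rightarrow> bool"
  where "noise_concentrated n \<sigma> \<delta> w e \<longleftrightarrow>
    (\<forall>k. \<bar>\<Sum>i<n. e i k\<bar> \<le> \<delta> * real n) \<and>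
    (\<forall>k l. \<bar>\<Sum>i<n. w i k * e i l\<bar> \<le> \<delta> * real n) \<and>
    (\<forall>k l. \<bar>\<Sum>i<n. (e i k * e i l - (if k = l then \<sigma> else 0))\<bar> \<le> \<delta> * real n)"

lemma inner_gram_augmented:
  fixes z :: "nat \<Rightarrow> real^('p::finite option)" and w e :: "nat \<Rightarrow> 'p \<Rightarrow> real"
  assumes "\<And>i. z i $ None = 1" and "\<And>i k. z i $ Some k = w i k + e i k"
  shows "v \<bullet> (gram z {..<n} *v v)
    = (\<Sum>i<n. ((v $ None + (\<Sum>k\<in>UNIV. w i k * v $ Some k)) + (\<Sum>k\<in>UNIV. e i k * v $ Some k))\<^sup>2)"
  unfolding inner_gram_mult_vec
  by (intro sum.cong refl) (simp add: inner_vec_def sum_UNIV_option assms algebra_simps sum.distrib)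

text \<open>The intercept coordinate is only controlled through the deterministic part of the design,
  the other coordinates through the noise covariance \<open>\<sigma> I\<close>; the weight \<open>\<theta>\<close> balances the two.\<close>
lemma intercept_weight_ge:
  fixes K \<sigma> U c :: real
  assumes K: "K \<ge> 0" and \<sigma>: "\<sigma> > 0" and U: "U \<ge> 0"
  defines "\<theta> \<equiv> \<sigma> / (2 * (K + \<sigma> + 1))"
  shows "\<theta> / 2 * (c\<^sup>2 + U) \<le> \<theta> * (c\<^sup>2 / 2 - K * U) + \<sigma> * U" "0 \<le> \<theta>" "\<theta> \<le> 1"
proof -
  have "\<theta> * (K + 1 / 2) \<le> \<sigma>"
    using K \<sigma> by (simp add: \<theta>_def field_simps)
  then have "\<theta> * (K + 1 / 2) * U \<le> \<sigma> * U"
    using U by (rule mult_right_mono)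
  then show "\<theta> / 2 * (c\<^sup>2 + U) \<le> \<theta> * (c\<^sup>2 / 2 - K * U) + \<sigma> * U"
    by (simp add: algebra_simps)
  show "0 \<le> \<theta>" "\<theta> \<le> 1"
    using K \<sigma> by (simp_all add: \<theta>_def field_simps)
qed

lemma gram_augmented_design_ge:
  fixes z :: "nat \<Rightarrow> real^('p::finite option)" and w e :: "nat \<Rightarrow> 'p \<Rightarrow> real"
  assumes intercept: "\<And>i. z i $ None = 1" and rows: "\<And>i k. z i $ Some k = w i k + e i k"
    and design: "(\<Sum>i<n. \<Sum>k\<in>UNIV. (w i k)\<^sup>2) \<le> K * real n" and K: "K \<ge> 0" and \<sigma>: "\<sigma> > 0"
    and concentrated: "noise_concentrated n \<sigma> \<delta> w e"
  shows "(\<sigma> / (4 * (K + \<sigma> + 1)) - (3 * (real CARD('p))\<^sup>2 + 2 * real CARD('p)) * \<delta>) * real n * (norm v)\<^sup>2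
    \<le> v \<bullet> (gram z {..<n} *v v)"
proof -
  define p where "p = real CARD('p)"
  define \<theta> where "\<theta> = \<sigma> / (2 * (K + \<sigma> + 1))"
  define N where "N = (norm v)\<^sup>2"
  define c where "c = v $ None"
  define u where "u k = v $ Some k" for k
  define U where "U = (\<Sum>k\<in>UNIV. (u k)\<^sup>2)"
  define a where "a i = c + (\<Sum>k\<in>UNIV. w i k * u k)" for i
  define b where "b i = (\<Sum>k\<in>UNIV. e i k * u k)" for i
  have N: "N = c\<^sup>2 + U"
    unfolding N_def c_def U_def u_def norm_squared_vec by (simp add: sum_UNIV_option)
  have U: "U \<ge> 0"
    unfolding U_def by (simp add: sum_nonneg)
  note \<theta> = intercept_weight_ge(1)[OF K \<sigma> U, of c, folded \<theta>_def] intercept_weight_ge(2,3)[OF K \<sigma> U, folded \<theta>_def]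
  have uc: "\<bar>u k * c\<bar> \<le> N" and uu: "\<bar>u k * u l\<bar> \<le> N" for k l
    unfolding u_def c_def N_def abs_mult power2_eq_square by (intro mult_mono component_le_norm_cart; simp)+
  have "real n * c\<^sup>2 / 2 - K * real n * U \<le> (\<Sum>i<n. (a i)\<^sup>2)"
    using sum_sq_affine_ge[of n c w u] mult_right_mono[OF design U] unfolding a_def U_def by linarith
  then have "\<theta> * (real n * c\<^sup>2 / 2 - K * real n * U) \<le> (\<Sum>i<n. (a i)\<^sup>2)"
    using \<theta>(2,3) by (smt (verit) mult_left_le_one_le mult_left_mono sum_nonneg zero_le_power2)
  moreover have "\<bar>\<Sum>i<n. a i * b i\<bar> \<le> (p + p\<^sup>2) * (\<delta> * real n) * N"
    using concentrated unfolding a_def b_def p_def noise_concentrated_def by (intro cross_term_le uc uu) auto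
  moreover have "\<sigma> * real n * U - p\<^sup>2 * (\<delta> * real n) * N \<le> (\<Sum>i<n. (b i)\<^sup>2)"
    using concentrated unfolding b_def U_def p_def noise_concentrated_def by (intro sum_sq_noise_form_ge uu) auto
  moreover have "v \<bullet> (gram z {..<n} *v v) = (\<Sum>i<n. (a i + b i)\<^sup>2)"
    unfolding inner_gram_augmented[OF intercept rows] a_def b_def c_def u_def ..
  then have "v \<bullet> (gram z {..<n} *v v) = (\<Sum>i<n. (a i)\<^sup>2) + 2 * (\<Sum>i<n. a i * b i) + (\<Sum>i<n. (b i)\<^sup>2)"
    by (simp add: power2_sum sum.distrib sum_distrib_left mult.assoc)
  moreover have "\<theta> / 2 * real n * N \<le> \<theta> * (real n * c\<^sup>2 / 2 - K * real n * U) + \<sigma> * real n * U"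
  proof -
    have "\<theta> / 2 * real n * N = real n * (\<theta> / 2 * (c\<^sup>2 + U))"
      unfolding N by (simp add: mult_ac)
    also have "\<dots> \<le> real n * (\<theta> * (c\<^sup>2 / 2 - K * U) + \<sigma> * U)"
      by (rule mult_left_mono[OF \<theta>(1)]) simp
    also have "\<dots> = \<theta> * (real n * c\<^sup>2 / 2 - K * real n * U) + \<sigma> * real n * U"
      by (simp add: algebra_simps)
    finally show ?thesis .
  qed
  ultimately have "\<theta> / 2 * real n * N - (3 * p\<^sup>2 + 2 * p) * \<delta> * real n * N \<le> v \<bullet> (gram z {..<n} *v v)"
    by (simp add: algebra_simps power2_eq_square)
  then show ?thesis
    unfolding N_def \<theta>_def p_def by (simp add: algebra_simps)
qed

section \<open>Events of vanishing probability\<close>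

text \<open>Working with an exceptional event \<open>B\<close> avoids any measurability requirement on \<open>P\<close>.\<close>
definition fails_with_prob_le :: "'w measure \<Rightarrow> real \<Rightarrow> ('w \<Rightarrow> bool) \<Rightarrow> bool" where
  "fails_with_prob_le M r P \<longleftrightarrow> (\<exists>B\<in>sets M. measure M B \<le> r \<and> (\<forall>\<omega>\<in>space M - B. P \<omega>))"

definition asymp_almost_surely :: "'w measure \<Rightarrow> (nat \<Rightarrow> 'w \<Rightarrow> bool) \<Rightarrow> bool" where
  "asymp_almost_surely M P \<longleftrightarrow> (\<forall>r>0. \<forall>\<^sub>F n in sequentially. fails_with_prob_le M r (P n))"

definition bounded_in_prob :: "'w measure \<Rightarrow> (nat \<Rightarrow> 'w \<Rightarrow> real) \<Rightarrow> bool" where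
  "bounded_in_prob M Y \<longleftrightarrow> (\<forall>r>0. \<exists>K. \<forall>\<^sub>F n in sequentially. fails_with_prob_le M r (\<lambda>\<omega>. \<bar>Y n \<omega>\<bar> \<le> K))"

lemma fails_with_prob_leI:
  "{\<omega>\<in>space M. \<not> P \<omega>} \<in> sets M \<Longrightarrow> measure M {\<omega>\<in>space M. \<not> P \<omega>} \<le> r \<Longrightarrow> fails_with_prob_le M r P"
  unfolding fails_with_prob_le_def by (intro bexI[of _ "{\<omega>\<in>space M. \<not> P \<omega>}"]) auto

lemma fails_with_prob_le_mono:
  assumes "fails_with_prob_le M r P" "r \<le> s" "\<And>\<omega>. \<omega> \<in> space M \<Longrightarrow> P \<omega> \<Longrightarrow> Q \<omega>"
  shows "fails_with_prob_le M s Q"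
proof -
  obtain B where "B \<in> sets M" "measure M B \<le> r" "\<forall>\<omega>\<in>space M - B. P \<omega>"
    using assms(1) unfolding fails_with_prob_le_def by blast
  with assms(2,3) show ?thesis
    unfolding fails_with_prob_le_def by (intro bexI[of _ B]) auto
qed

lemma fails_with_prob_le_conj:
  assumes "fails_with_prob_le M r P" "fails_with_prob_le M s Q"
  shows "fails_with_prob_le M (r + s) (\<lambda>\<omega>. P \<omega> \<and> Q \<omega>)"
proof -
  obtain A B where "A \<in> sets M" "B \<in> sets M" "measure M A \<le> r" "measure M B \<le> s"
    "\<forall>\<omega>\<in>space M - A. P \<omega>" "\<forall>\<omega>\<in>space M - B. Q \<omega>"
    using assms unfolding fails_with_prob_le_def by blast
  then show ?thesis
    unfolding fails_with_prob_le_def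
    by (intro bexI[of _ "A \<union> B"]) (auto intro: order_trans[OF measure_Un_le])
qed

lemma fails_with_prob_le_all:
  assumes "finite I" "\<And>i. i \<in> I \<Longrightarrow> fails_with_prob_le M (r i) (P i)"
  shows "fails_with_prob_le M (\<Sum>i\<in>I. r i) (\<lambda>\<omega>. \<forall>i\<in>I. P i \<omega>)"
proof -
  obtain B where B: "\<And>i. i \<in> I \<Longrightarrow> B i \<in> sets M \<and> measure M (B i) \<le> r i \<and> (\<forall>\<omega>\<in>space M - B i. P i \<omega>)"
    using assms(2) unfolding fails_with_prob_le_def by metis
  have "measure M (\<Union>i\<in>I. B i) \<le> (\<Sum>i\<in>I. r i)"
    using B by (intro order_trans[OF measure_UNION_le[OF assms(1)]] sum_mono) auto
  then show ?thesis
    unfolding fails_with_prob_le_def using B assms(1) by (intro bexI[of _ "\<Union>i\<in>I. B i"]) auto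
qed

lemma measure_le_if_fails_with_prob_le:
  assumes "finite_measure M" "fails_with_prob_le M r P"
  shows "measure M {\<omega>\<in>space M. \<not> P \<omega>} \<le> r"
proof -
  obtain B where B: "B \<in> sets M" "measure M B \<le> r" "\<forall>\<omega>\<in>space M - B. P \<omega>"
    using assms(2) unfolding fails_with_prob_le_def by blast
  have "measure M {\<omega>\<in>space M. \<not> P \<omega>} \<le> measure M B"
  proof (cases "{\<omega>\<in>space M. \<not> P \<omega>} \<in> sets M")
    case True
    then show ?thesis
      using B assms(1) by (intro finite_measure.finite_measure_mono) auto
  qed (simp add: measure_notin_sets)
  with B show ?thesis by simp
qed

lemma asymp_almost_surely_if_fails_with_prob_le:
  assumes "\<forall>\<^sub>F n in sequentially. fails_with_prob_le M (b n) (P n)"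
    and "\<forall>\<^sub>F n in sequentially. b n \<le> C / real n"
  shows "asymp_almost_surely M P"
  unfolding asymp_almost_surely_def
proof (intro allI impI)
  fix r :: real assume "r > 0"
  then have "\<forall>\<^sub>F n in sequentially. C / real n < r"
    by (rule order_tendstoD(2)[OF lim_const_over_n])
  with assms show "\<forall>\<^sub>F n in sequentially. fails_with_prob_le M r (P n)"
    by eventually_elim (auto intro: fails_with_prob_le_mono)
qed

lemma asymp_almost_surely_conj:
  assumes "asymp_almost_surely M P" "asymp_almost_surely M Q"
  shows "asymp_almost_surely M (\<lambda>n \<omega>. P n \<omega> \<and> Q n \<omega>)"
  unfolding asymp_almost_surely_def
proof (intro allI impI)
  fix r :: real assume "r > 0"
  then have "\<forall>\<^sub>F n in sequentially. fails_with_prob_le M (r / 2) (P n) \<and> fails_with_prob_le M (r / 2) (Q n)"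
    using assms unfolding asymp_almost_surely_def by (simp add: eventually_conj)
  then show "\<forall>\<^sub>F n in sequentially. fails_with_prob_le M r (\<lambda>\<omega>. P n \<omega> \<and> Q n \<omega>)"
  proof eventually_elim
    case (elim n)
    then show ?case
      using fails_with_prob_le_conj[of M "r / 2" "P n" "r / 2" "Q n"] by simp
  qed
qed

lemma asymp_almost_surely_mono:
  assumes "asymp_almost_surely M P" and "\<And>n \<omega>. \<omega> \<in> space M \<Longrightarrow> P n \<omega> \<Longrightarrow> Q n \<omega>"
  shows "asymp_almost_surely M Q"
  unfolding asymp_almost_surely_def
proof (intro allI impI)
  fix r :: real assume "r > 0"
  with assms(1) have "\<forall>\<^sub>F n in sequentially. fails_with_prob_le M r (P n)"
    unfolding asymp_almost_surely_def by blast
  then show "\<forall>\<^sub>F n in sequentially. fails_with_prob_le M r (Q n)"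
    by eventually_elim (rule fails_with_prob_le_mono[OF _ order_refl assms(2)])
qed

lemma measure_tendsto_zero_if_asymp_almost_surely:
  assumes "finite_measure M" "asymp_almost_surely M P"
  shows "(\<lambda>n. measure M {\<omega>\<in>space M. \<not> P n \<omega>}) \<longlonglongrightarrow> 0"
proof (rule LIMSEQ_I)
  fix r :: real assume "r > 0"
  then have "\<forall>\<^sub>F n in sequentially. fails_with_prob_le M (r / 2) (P n)"
    using assms(2) unfolding asymp_almost_surely_def by simp
  then obtain N where "\<And>n. n \<ge> N \<Longrightarrow> fails_with_prob_le M (r / 2) (P n)"
    unfolding eventually_sequentially by blast
  then have le: "\<And>n. n \<ge> N \<Longrightarrow> measure M {\<omega>\<in>space M. \<not> P n \<omega>} \<le> r / 2"
    by (rule measure_le_if_fails_with_prob_le[OF assms(1)])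
  show "\<exists>N. \<forall>n\<ge>N. norm (measure M {\<omega>\<in>space M. \<not> P n \<omega>} - 0) < r"
  proof (intro exI[of _ N] allI impI)
    fix n assume "N \<le> n"
    have "0 \<le> measure M {\<omega>\<in>space M. \<not> P n \<omega>}"
      by (rule measure_nonneg)
    then show "norm (measure M {\<omega>\<in>space M. \<not> P n \<omega>} - 0) < r"
      using le[OF \<open>N \<le> n\<close>] \<open>r > 0\<close> by (simp only: real_norm_def diff_zero abs_of_nonneg)
  qed
qed

lemma asymp_almost_surely_all:
  assumes "finite I" and "\<And>i. i \<in> I \<Longrightarrow> asymp_almost_surely M (P i)"
  shows "asymp_almost_surely M (\<lambda>n \<omega>. \<forall>i\<in>I. P i n \<omega>)"
  unfolding asymp_almost_surely_def
proof (intro allI impI)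
  fix r :: real assume "r > 0"
  then have "r / real (card I + 1) > 0"
    by simp
  then have "\<forall>\<^sub>F n in sequentially. \<forall>i\<in>I. fails_with_prob_le M (r / real (card I + 1)) (P i n)"
    using assms unfolding asymp_almost_surely_def by (simp add: eventually_ball_finite)
  then show "\<forall>\<^sub>F n in sequentially. fails_with_prob_le M r (\<lambda>\<omega>. \<forall>i\<in>I. P i n \<omega>)"
  proof eventually_elim
    case (elim n)
    then have "fails_with_prob_le M (\<Sum>i\<in>I. r / real (card I + 1)) (\<lambda>\<omega>. \<forall>i\<in>I. P i n \<omega>)"
      by (intro fails_with_prob_le_all[OF assms(1)]) auto
    then show ?case
      by (rule fails_with_prob_le_mono) (use \<open>r > 0\<close> in \<open>auto simp: field_simps\<close>)
  qed
qed

lemma asymp_almost_surely_const: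
  "\<forall>\<^sub>F n in sequentially. Q n \<Longrightarrow> asymp_almost_surely M (\<lambda>n \<omega>. Q n)"
  unfolding asymp_almost_surely_def fails_with_prob_le_def by (auto elim: eventually_mono intro!: bexI[of _ "{}"])

lemma asymp_almost_surely_if_bounded_in_prob:
  assumes "bounded_in_prob M Y" and "\<And>K. asymp_almost_surely M (\<lambda>n \<omega>. \<bar>Y n \<omega>\<bar> \<le> K \<longrightarrow> P n \<omega>)"
  shows "asymp_almost_surely M P"
  unfolding asymp_almost_surely_def
proof (intro allI impI)
  fix r :: real assume "r > 0"
  then have "r / 2 > 0"
    by simp
  then obtain K where "\<forall>\<^sub>F n in sequentially. fails_with_prob_le M (r / 2) (\<lambda>\<omega>. \<bar>Y n \<omega>\<bar> \<le> K)"
    using assms(1) unfolding bounded_in_prob_def by blast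
  moreover have "\<forall>\<^sub>F n in sequentially. fails_with_prob_le M (r / 2) (\<lambda>\<omega>. \<bar>Y n \<omega>\<bar> \<le> K \<longrightarrow> P n \<omega>)"
    using assms(2)[of K] \<open>r / 2 > 0\<close> unfolding asymp_almost_surely_def by blast
  ultimately show "\<forall>\<^sub>F n in sequentially. fails_with_prob_le M r (P n)"
  proof eventually_elim
    case (elim n)
    then have "fails_with_prob_le M (r / 2 + r / 2) (\<lambda>\<omega>. \<bar>Y n \<omega>\<bar> \<le> K \<and> (\<bar>Y n \<omega>\<bar> \<le> K \<longrightarrow> P n \<omega>))"
      by (rule fails_with_prob_le_conj)
    then show ?case
      by (rule fails_with_prob_le_mono) auto
  qed
qed

lemma sum_sq_delta_loo_minus_delta_full_vanishes:
  fixes z :: "nat \<Rightarrow> 'w \<Rightarrow> nat \<Rightarrow> real^'k" and v :: "nat \<Rightarrow> 'w \<Rightarrow> nat \<Rightarrow> real"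
  assumes lam: "\<And>n. lam n \<ge> 0" and \<mu>: "\<mu> > 0"
    and gram: "asymp_almost_surely M (\<lambda>n \<omega>. \<forall>u. \<mu> * real n * (norm u)\<^sup>2 \<le> u \<bullet> (gram (z n \<omega>) {..<n} *v u))"
    and rows: "\<And>d. d > 0 \<Longrightarrow> asymp_almost_surely M (\<lambda>n \<omega>. \<forall>i<n. (norm (z n \<omega> i))\<^sup>2 \<le> d * real n)"
    and cross: "bounded_in_prob M (\<lambda>n \<omega>. (norm (cross (z n \<omega>) (v n \<omega>) {..<n}))\<^sup>2 / real n)"
    and weighted: "bounded_in_prob M (\<lambda>n \<omega>. (\<Sum>i<n. (v n \<omega> i)\<^sup>2 * (norm (z n \<omega> i))\<^sup>2) / real n)"
    and t: "t > 0"
  shows "asymp_almost_surely M (\<lambda>n \<omega>.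
    (\<Sum>i<n. (delta_loo (z n \<omega>) (v n \<omega>) (lam n) n i - delta_full (z n \<omega>) (v n \<omega>) (lam n) n i)\<^sup>2) \<le> t)"
proof (rule asymp_almost_surely_if_bounded_in_prob[OF cross], rule asymp_almost_surely_if_bounded_in_prob[OF weighted])
  fix K\<^sub>c K\<^sub>w
  define Q where "Q = 16 * max K\<^sub>c K\<^sub>w / \<mu> ^ 3 + 8 * max K\<^sub>c K\<^sub>w / \<mu>\<^sup>2"
  obtain d where d: "d > 0" "d < min (\<mu> / 2) 1" "d < t / (\<bar>Q\<bar> + 1)"
    using field_lbound_gt_zero[of "min (\<mu> / 2) 1" "t / (\<bar>Q\<bar> + 1)"] \<mu> t by auto
  have "d * Q \<le> d * \<bar>Q\<bar>"
    using d(1) by (simp add: mult_left_mono)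
  also have "\<dots> \<le> t / (\<bar>Q\<bar> + 1) * \<bar>Q\<bar>"
    using d by (intro mult_right_mono) auto
  also have "\<dots> \<le> t"
    using t by (simp add: field_simps)
  finally have dQ: "d * Q \<le> t" .
  have "asymp_almost_surely M (\<lambda>n \<omega>. n > 0 \<and> (\<forall>i<n. (norm (z n \<omega> i))\<^sup>2 \<le> d * real n) \<and>
      (\<forall>u. \<mu> * real n * (norm u)\<^sup>2 \<le> u \<bullet> (gram (z n \<omega>) {..<n} *v u)))"
    using gram rows[OF d(1)] by (intro asymp_almost_surely_conj asymp_almost_surely_const eventually_gt_at_top)
  then show "asymp_almost_surely M (\<lambda>n \<omega>.
      \<bar>(\<Sum>i<n. (v n \<omega> i)\<^sup>2 * (norm (z n \<omega> i))\<^sup>2) / real n\<bar> \<le> K\<^sub>w \<longrightarrow>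
      \<bar>(norm (cross (z n \<omega>) (v n \<omega>) {..<n}))\<^sup>2 / real n\<bar> \<le> K\<^sub>c \<longrightarrow>
      (\<Sum>i<n. (delta_loo (z n \<omega>) (v n \<omega>) (lam n) n i - delta_full (z n \<omega>) (v n \<omega>) (lam n) n i)\<^sup>2) \<le> t)"
  proof (rule asymp_almost_surely_mono, intro impI)
    fix n \<omega>
    assume good: "n > 0 \<and> (\<forall>i<n. (norm (z n \<omega> i))\<^sup>2 \<le> d * real n) \<and>
        (\<forall>u. \<mu> * real n * (norm u)\<^sup>2 \<le> u \<bullet> (gram (z n \<omega>) {..<n} *v u))"
      and weighted_K: "\<bar>(\<Sum>i<n. (v n \<omega> i)\<^sup>2 * (norm (z n \<omega> i))\<^sup>2) / real n\<bar> \<le> K\<^sub>w"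
      and cross_K: "\<bar>(norm (cross (z n \<omega>) (v n \<omega>) {..<n}))\<^sup>2 / real n\<bar> \<le> K\<^sub>c"
    have "(norm (cross (z n \<omega>) (v n \<omega>) {..<n}))\<^sup>2 / real n \<le> max K\<^sub>c K\<^sub>w"
      "(\<Sum>i<n. (v n \<omega> i)\<^sup>2 * (norm (z n \<omega> i))\<^sup>2) / real n \<le> max K\<^sub>c K\<^sub>w"
      using weighted_K cross_K sum_nonneg[of "{..<n}" "\<lambda>i. (v n \<omega> i)\<^sup>2 * (norm (z n \<omega> i))\<^sup>2"] by auto
    then have "(norm (cross (z n \<omega>) (v n \<omega>) {..<n}))\<^sup>2 \<le> max K\<^sub>c K\<^sub>w * real n"
      "(\<Sum>i<n. (v n \<omega> i)\<^sup>2 * (norm (z n \<omega> i))\<^sup>2) \<le> max K\<^sub>c K\<^sub>w * real n"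
      using good by (simp_all add: pos_divide_le_eq)
    with good d have "(\<Sum>i<n. (delta_loo (z n \<omega>) (v n \<omega>) (lam n) n i
        - delta_full (z n \<omega>) (v n \<omega>) (lam n) n i)\<^sup>2) \<le> d * Q"
      unfolding Q_def by (intro sum_sq_delta_loo_minus_delta_full_le_scaled[OF lam \<mu>]) auto
    with dQ show "(\<Sum>i<n. (delta_loo (z n \<omega>) (v n \<omega>) (lam n) n i
        - delta_full (z n \<omega>) (v n \<omega>) (lam n) n i)\<^sup>2) \<le> t"
      by linarith
  qed
qed

section \<open>Moments and tail bounds\<close>

lemma distributed_normal_moments:
  assumes D: "distributed M lborel X (normal_density 0 (sqrt s))" and s: "s > 0"
  shows "X \<in> borel_measurable M" "integrable M (\<lambda>\<omega>. X \<omega> ^ j)" "(\<integral>\<omega>. X \<omega> \<partial>M) = 0"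
    "(\<integral>\<omega>. (X \<omega>)\<^sup>2 \<partial>M) = s" "(\<integral>\<omega>. X \<omega> ^ 4 \<partial>M) = 3 * s\<^sup>2"
proof -
  have sqrt_s: "sqrt s > 0"
    using s by simp
  show "X \<in> borel_measurable M"
    using distributed_measurable[OF D] by simp
  have "integrable lborel (\<lambda>x. normal_density 0 (sqrt s) x * x ^ j)"
    using integrable_normal_moment[OF sqrt_s, of 0 j] by simp
  then show "integrable M (\<lambda>\<omega>. X \<omega> ^ j)"
    using distributed_integrable[OF D, of "\<lambda>x. x ^ j"] by simp
  have moment: "(\<integral>\<omega>. X \<omega> ^ j \<partial>M) = (\<integral>x. normal_density 0 (sqrt s) x * x ^ j \<partial>lborel)" for j
    using distributed_integral[OF D, of "\<lambda>x. x ^ j"] by simp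
  show "(\<integral>\<omega>. X \<omega> \<partial>M) = 0"
    using moment[of 1] integral_normal_moment_odd[OF sqrt_s, of 0 0] by simp
  show "(\<integral>\<omega>. (X \<omega>)\<^sup>2 \<partial>M) = s"
    using moment[of 2] integral_normal_moment_even[OF sqrt_s, of 0 1] s by simp
  show "(\<integral>\<omega>. X \<omega> ^ 4 \<partial>M) = 3 * s\<^sup>2"
    using moment[of 4] integral_normal_moment_even[OF sqrt_s, of 0 2] s
    by (simp add: fact_numeral power2_eq_square field_simps)
qed

lemma integrable_mult_if_square_integrable:
  fixes f g :: "'w \<Rightarrow> real"
  assumes [measurable]: "f \<in> borel_measurable M" "g \<in> borel_measurable M"
    and "integrable M (\<lambda>x. (f x)\<^sup>2)" "integrable M (\<lambda>x. (g x)\<^sup>2)"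
  shows "integrable M (\<lambda>x. f x * g x)"
proof (rule Bochner_Integration.integrable_bound[where f="\<lambda>x. (f x)\<^sup>2 + (g x)\<^sup>2"])
  show "integrable M (\<lambda>x. (f x)\<^sup>2 + (g x)\<^sup>2)"
    using assms by simp
  have "\<bar>f x * g x\<bar> \<le> (f x)\<^sup>2 + (g x)\<^sup>2" for x
  proof -
    have "2 * (\<bar>f x\<bar> * \<bar>g x\<bar>) \<le> (f x)\<^sup>2 + (g x)\<^sup>2"
      using zero_le_power2[of "\<bar>f x\<bar> - \<bar>g x\<bar>"] unfolding power2_diff power2_abs by simp
    then show ?thesis
      unfolding abs_mult using mult_nonneg_nonneg[OF abs_ge_zero abs_ge_zero, of "f x" "g x"] by linarith
  qed
  then show "AE x in M. norm (f x * g x) \<le> norm ((f x)\<^sup>2 + (g x)\<^sup>2)"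
    by simp
qed simp

lemma integral_square_sum_uncorrelated:
  fixes Y :: "'i \<Rightarrow> 'w \<Rightarrow> real"
  assumes S: "finite S" and meas: "\<And>i. i \<in> S \<Longrightarrow> Y i \<in> borel_measurable M"
    and sq: "\<And>i. i \<in> S \<Longrightarrow> integrable M (\<lambda>x. (Y i x)\<^sup>2)"
    and uncorrelated: "\<And>i j. i \<in> S \<Longrightarrow> j \<in> S \<Longrightarrow> i \<noteq> j \<Longrightarrow> (\<integral>x. Y i x * Y j x \<partial>M) = 0"
  shows "integrable M (\<lambda>x. (\<Sum>i\<in>S. Y i x)\<^sup>2)"
    "(\<integral>x. (\<Sum>i\<in>S. Y i x)\<^sup>2 \<partial>M) = (\<Sum>i\<in>S. \<integral>x. (Y i x)\<^sup>2 \<partial>M)"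
proof -
  have square: "(\<lambda>x. (\<Sum>i\<in>S. Y i x)\<^sup>2) = (\<lambda>x. \<Sum>i\<in>S. \<Sum>j\<in>S. Y i x * Y j x)"
    by (simp add: power2_eq_square sum_product)
  have products: "integrable M (\<lambda>x. Y i x * Y j x)" if "i \<in> S" "j \<in> S" for i j
    using that by (intro integrable_mult_if_square_integrable meas sq)
  then show "integrable M (\<lambda>x. (\<Sum>i\<in>S. Y i x)\<^sup>2)"
    unfolding square by (intro Bochner_Integration.integrable_sum) auto
  have "(\<integral>x. (\<Sum>i\<in>S. Y i x)\<^sup>2 \<partial>M) = (\<Sum>i\<in>S. \<Sum>j\<in>S. \<integral>x. Y i x * Y j x \<partial>M)"
    unfolding square using products
    by (simp add: Bochner_Integration.integral_sum Bochner_Integration.integrable_sum)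
  also have "\<dots> = (\<Sum>i\<in>S. \<integral>x. Y i x * Y i x \<partial>M)"
  proof (rule sum.cong[OF refl])
    fix i assume "i \<in> S"
    have "(\<Sum>j\<in>S. \<integral>x. Y i x * Y j x \<partial>M)
        = (\<integral>x. Y i x * Y i x \<partial>M) + (\<Sum>j\<in>S - {i}. \<integral>x. Y i x * Y j x \<partial>M)"
      using S \<open>i \<in> S\<close> by (rule sum.remove)
    also have "(\<Sum>j\<in>S - {i}. \<integral>x. Y i x * Y j x \<partial>M) = 0"
      using \<open>i \<in> S\<close> uncorrelated by (intro sum.neutral) auto
    finally show "(\<Sum>j\<in>S. \<integral>x. Y i x * Y j x \<partial>M) = (\<integral>x. Y i x * Y i x \<partial>M)"
      by simp
  qed
  finally show "(\<integral>x. (\<Sum>i\<in>S. Y i x)\<^sup>2 \<partial>M) = (\<Sum>i\<in>S. \<integral>x. (Y i x)\<^sup>2 \<partial>M)"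
    by (simp add: power2_eq_square)
qed

lemma (in finite_measure) fails_with_prob_le_Markov:
  assumes U: "integrable M U" and nonneg: "\<And>\<omega>. \<omega> \<in> space M \<Longrightarrow> 0 \<le> U \<omega>" and t: "t > 0"
  shows "fails_with_prob_le M ((\<integral>\<omega>. U \<omega> \<partial>M) / t) (\<lambda>\<omega>. U \<omega> \<le> t)"
proof (rule fails_with_prob_leI)
  have [measurable]: "U \<in> borel_measurable M"
    using U by auto
  show "{\<omega> \<in> space M. \<not> U \<omega> \<le> t} \<in> sets M"
    by measurable
  have "measure M {\<omega> \<in> space M. \<not> U \<omega> \<le> t} \<le> measure M {\<omega>\<in>space M. U \<omega> \<ge> t}"
    by (intro finite_measure_mono) auto
  also have "\<dots> \<le> (\<integral>\<omega>. U \<omega> \<partial>M) / t"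
    using U nonneg t by (intro integral_Markov_inequality_measure[where A="space M"]) auto
  finally show "measure M {\<omega> \<in> space M. \<not> U \<omega> \<le> t} \<le> (\<integral>\<omega>. U \<omega> \<partial>M) / t" .
qed

lemma (in finite_measure) fails_with_prob_le_Chebyshev:
  fixes Y :: "'i \<Rightarrow> 'a \<Rightarrow> real"
  assumes S: "finite S" and meas: "\<And>i. i \<in> S \<Longrightarrow> Y i \<in> borel_measurable M"
    and sq: "\<And>i. i \<in> S \<Longrightarrow> integrable M (\<lambda>x. (Y i x)\<^sup>2)"
    and uncorrelated: "\<And>i j. i \<in> S \<Longrightarrow> j \<in> S \<Longrightarrow> i \<noteq> j \<Longrightarrow> (\<integral>x. Y i x * Y j x \<partial>M) = 0"
    and t: "t > 0"
  shows "fails_with_prob_le M ((\<Sum>i\<in>S. \<integral>x. (Y i x)\<^sup>2 \<partial>M) / t\<^sup>2) (\<lambda>x. \<bar>\<Sum>i\<in>S. Y i x\<bar> \<le> t)"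
proof -
  note sum = integral_square_sum_uncorrelated[OF S meas sq uncorrelated]
  have "fails_with_prob_le M ((\<integral>x. (\<Sum>i\<in>S. Y i x)\<^sup>2 \<partial>M) / t\<^sup>2) (\<lambda>x. (\<Sum>i\<in>S. Y i x)\<^sup>2 \<le> t\<^sup>2)"
    using t by (intro fails_with_prob_le_Markov sum(1)) auto
  moreover have "(\<integral>x. (\<Sum>i\<in>S. Y i x)\<^sup>2 \<partial>M) = (\<Sum>i\<in>S. \<integral>x. (Y i x)\<^sup>2 \<partial>M)"
    by (rule sum(2))
  ultimately have "fails_with_prob_le M ((\<Sum>i\<in>S. \<integral>x. (Y i x)\<^sup>2 \<partial>M) / t\<^sup>2)
      (\<lambda>x. (\<Sum>i\<in>S. Y i x)\<^sup>2 \<le> t\<^sup>2)"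
    by simp
  then show ?thesis
    by (rule fails_with_prob_le_mono) (use t in \<open>auto simp: abs_le_square_iff[symmetric]\<close>)
qed

lemma (in prob_space) bounded_in_prob_if_expectation_le:
  assumes integrable: "\<And>n. integrable M (Y n)" and nonneg: "\<And>n \<omega>. \<omega> \<in> space M \<Longrightarrow> 0 \<le> Y n \<omega>"
    and expectation: "\<forall>\<^sub>F n in sequentially. (\<integral>\<omega>. Y n \<omega> \<partial>M) \<le> C * real n"
  shows "bounded_in_prob M (\<lambda>n \<omega>. Y n \<omega> / real n)"
  unfolding bounded_in_prob_def
proof (intro allI impI)
  fix r :: real assume r: "r > 0"
  define K where "K = \<bar>C\<bar> / r + 1"
  have K: "K > 0"
    using r by (simp add: K_def add_nonneg_pos)
  have "C \<le> r * K"
    using r by (simp add: K_def distrib_left)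
  then have "C / K \<le> r"
    using K by (simp add: pos_divide_le_eq mult.commute)
  have "\<forall>\<^sub>F n in sequentially. n > 0 \<and> (\<integral>\<omega>. Y n \<omega> \<partial>M) \<le> C * real n"
    using expectation eventually_gt_at_top[of 0] by eventually_elim simp
  then have "\<forall>\<^sub>F n in sequentially. fails_with_prob_le M r (\<lambda>\<omega>. \<bar>Y n \<omega> / real n\<bar> \<le> K)"
  proof eventually_elim
    case (elim n)
    then have "fails_with_prob_le M ((\<integral>\<omega>. Y n \<omega> \<partial>M) / (K * real n)) (\<lambda>\<omega>. Y n \<omega> \<le> K * real n)"
      using elim by (intro fails_with_prob_le_Markov integrable nonneg mult_pos_pos K) simp_all
    moreover have "(\<integral>\<omega>. Y n \<omega> \<partial>M) / (K * real n) \<le> C * real n / (K * real n)"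
      using elim K by (intro divide_right_mono) auto
    moreover have "C * real n / (K * real n) = C / K"
      using elim by simp
    ultimately have "fails_with_prob_le M r (\<lambda>\<omega>. Y n \<omega> \<le> K * real n)"
      using \<open>C / K \<le> r\<close> by (elim fails_with_prob_le_mono) auto
    then show ?case
      by (rule fails_with_prob_le_mono) (use elim nonneg in \<open>simp_all add: pos_divide_le_eq\<close>)
  qed
  then show "\<exists>K. \<forall>\<^sub>F n in sequentially. fails_with_prob_le M r (\<lambda>\<omega>. \<bar>Y n \<omega> / real n\<bar> \<le> K)"
    by blast
qed

section \<open>The design\<close>

lemma matrix_vector_mult_norm_le:
  fixes A :: "real^'n^'m"
  shows "\<exists>K>0. \<forall>x. norm (A *v x) \<le> norm x * K"
  using bounded_linear.pos_bounded[OF matrix_vector_mul_bounded_linear] by blast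

lemma sum_sq_norm_design_le:
  fixes X :: "nat \<Rightarrow> nat \<Rightarrow> real^'e" and A :: "real^'e^'p"
  assumes "(\<lambda>n. (1 / real n) *\<^sub>R gram (X n) {..<n}) \<longlonglongrightarrow> S"
  shows "\<exists>K\<ge>0. \<forall>\<^sub>F n in sequentially. (\<Sum>i<n. (norm (A *v X n i))\<^sup>2) \<le> K * real n"
proof -
  obtain C where C: "C > 0" "\<And>x. norm (A *v x) \<le> norm x * C"
    using matrix_vector_mult_norm_le by blast
  have trace: "(\<Sum>a\<in>UNIV. ((1 / real n) *\<^sub>R gram (X n) {..<n}) $ a $ a) = (\<Sum>i<n. (norm (X n i))\<^sup>2) / real n" for n
    unfolding norm_squared_vec by (simp add: gram_def power2_eq_square sum.swap[of _ UNIV] sum_divide_distrib)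
  have "(\<lambda>n. \<Sum>a\<in>UNIV. ((1 / real n) *\<^sub>R gram (X n) {..<n}) $ a $ a) \<longlonglongrightarrow> (\<Sum>a\<in>UNIV. S $ a $ a)"
    by (intro tendsto_sum tendsto_vec_nth assms)
  then have "\<forall>\<^sub>F n in sequentially. (\<Sum>i<n. (norm (X n i))\<^sup>2) / real n < \<bar>\<Sum>a\<in>UNIV. S $ a $ a\<bar> + 1"
    unfolding trace by (rule order_tendstoD(2)) simp
  then have "\<forall>\<^sub>F n in sequentially. (\<Sum>i<n. (norm (A *v X n i))\<^sup>2) \<le> C\<^sup>2 * (\<bar>\<Sum>a\<in>UNIV. S $ a $ a\<bar> + 1) * real n"
    using eventually_gt_at_top[of 0]
  proof eventually_elim
    case (elim n)
    have "(\<Sum>i<n. (norm (A *v X n i))\<^sup>2) \<le> (\<Sum>i<n. C\<^sup>2 * (norm (X n i))\<^sup>2)"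
      using C by (intro sum_mono) (metis mult.commute norm_ge_zero power_mono power_mult_distrib)
    also have "\<dots> \<le> C\<^sup>2 * ((\<bar>\<Sum>a\<in>UNIV. S $ a $ a\<bar> + 1) * real n)"
      using elim by (simp add: sum_distrib_left[symmetric] pos_divide_less_eq mult_left_mono less_imp_le)
    finally show ?case
      by (simp add: mult.assoc)
  qed
  then show ?thesis
    by (intro exI[of _ "C\<^sup>2 * (\<bar>\<Sum>a\<in>UNIV. S $ a $ a\<bar> + 1)"]) simp
qed

lemma max_sq_norm_design_le:
  fixes X :: "nat \<Rightarrow> nat \<Rightarrow> real^'e" and A :: "real^'e^'p"
  assumes small: "(\<lambda>n. MAX i\<in>{..<n}. norm (X n i)) \<in> o(\<lambda>n. real n powr (1/3))" and c: "c > 0"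
  shows "\<forall>\<^sub>F n in sequentially. \<forall>i<n. (norm (A *v X n i))\<^sup>2 \<le> c * real n"
proof -
  obtain C where C: "C > 0" "\<And>x. norm (A *v x) \<le> norm x * C"
    using matrix_vector_mult_norm_le by blast
  have "\<forall>\<^sub>F n in sequentially. norm (MAX i\<in>{..<n}. norm (X n i)) \<le> sqrt c / C * norm (real n powr (1/3))"
    using c C by (intro landau_o.smallD[OF small]) simp
  then show ?thesis
    using eventually_gt_at_top[of 0]
  proof eventually_elim
    case (elim n)
    show ?case
    proof (intro allI impI)
      fix i assume "i < n"
      then have "norm (X n i) \<le> (MAX i\<in>{..<n}. norm (X n i))"
        by (intro Max_ge) auto
      also have "\<dots> \<le> sqrt c / C * real n powr (1/3)"
        using elim by simp
      finally have "norm (X n i) \<le> sqrt c / C * real n powr (1/3)" .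
      then have "norm (X n i) * C \<le> sqrt c / C * real n powr (1/3) * C"
        using C by (intro mult_right_mono) auto
      then have "norm (A *v X n i) \<le> sqrt c * real n powr (1/3)"
        using C order_trans[OF C(2)] by simp
      then have "(norm (A *v X n i))\<^sup>2 \<le> (sqrt c * real n powr (1/3))\<^sup>2"
        by (intro power_mono) auto
      also have "\<dots> = c * (real n powr (1/3) * real n powr (1/3))"
        using c by (simp add: power2_eq_square algebra_simps)
      also have "real n powr (1/3) * real n powr (1/3) = real n powr (2/3)"
        by (simp add: powr_add[symmetric])
      also have "real n powr (2/3) \<le> real n powr 1"
        using elim by (intro powr_mono) auto
      finally show "(norm (A *v X n i))\<^sup>2 \<le> c * real n"
        using c elim by (simp add: mult_left_mono)
    qed
  qed
qed

section \<open>The Gaussian noise model\<close>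

lemma ztilde_nth_None [simp]: "ztilde Gam x Em i $ None = 1"
  and ztilde_nth_Some [simp]: "ztilde Gam x Em i $ Some k = (transpose Gam *v x i) $ k + Em i k"
  by (simp_all add: ztilde_def)

lemma noise_family_simps [simp]:
  "noise_family E eps n (Inl (i, k)) = E n i k" "noise_family E eps n (Inr i) = eps n i"
  by (simp_all add: noise_family_def)

lemma mem_noise_index [simp]: "Inl (i, k) \<in> noise_index n \<longleftrightarrow> i < n" "Inr i \<in> noise_index n \<longleftrightarrow> i < n"
  by (auto simp: noise_index_def)

lemma sum_ztilde_variances:
  fixes Gam :: "real^'p::finite^'e"
  shows "(\<Sum>a\<in>UNIV. case a of None \<Rightarrow> 1 | Some k \<Rightarrow> ((transpose Gam *v x i) $ k)\<^sup>2 + s)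
    = 1 + (norm (transpose Gam *v x i))\<^sup>2 + real CARD('p) * s"
  unfolding sum_UNIV_option norm_squared_vec by (simp add: sum.distrib)

lemma norm_cross_squared: "(norm (cross z v S))\<^sup>2 = (\<Sum>a\<in>UNIV. (\<Sum>j\<in>S. v j * z j $ a)\<^sup>2)"
  by (simp add: norm_squared_vec cross_def sum_component)

lemma norm_ztilde_squared_le:
  fixes Gam :: "real^'p::finite^'e"
  shows "(norm (ztilde Gam x Em i))\<^sup>2 \<le> 1 + 2 * (norm (transpose Gam *v x i))\<^sup>2 + 2 * (\<Sum>k\<in>UNIV. (Em i k)\<^sup>2)"
proof -
  have "(\<Sum>k\<in>UNIV. ((transpose Gam *v x i) $ k + Em i k)\<^sup>2)
      \<le> (\<Sum>k\<in>UNIV. 2 * ((transpose Gam *v x i) $ k)\<^sup>2 + 2 * (Em i k)\<^sup>2)"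
    using square_diff_le[of _ "- _"] by (intro sum_mono) simp
  then show ?thesis
    unfolding norm_squared_vec[of "ztilde Gam x Em i"] norm_squared_vec[of "transpose Gam *v x i"]
    by (simp add: sum_UNIV_option sum.distrib sum_distrib_left)
qed

locale gaussian_noise_model = prob_space M for M :: "'w measure" +
  fixes E :: "nat \<Rightarrow> nat \<Rightarrow> 'p::finite \<Rightarrow> 'w \<Rightarrow> real" and eps :: "nat \<Rightarrow> nat \<Rightarrow> 'w \<Rightarrow> real"
    and sigmaz2 sigma2 :: real
  assumes sigmaz2_pos: "sigmaz2 > 0" and sigma2_pos: "sigma2 > 0"
    and indep: "\<And>n. indep_vars (\<lambda>_. borel) (noise_family E eps n) (noise_index n)"
    and E_normal: "\<And>n i k. i < n \<Longrightarrow> distributed M lborel (E n i k) (normal_density 0 (sqrt sigmaz2))"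
    and eps_normal: "\<And>n i. i < n \<Longrightarrow> distributed M lborel (eps n i) (normal_density 0 (sqrt sigma2))"
begin

lemmas E_moments = distributed_normal_moments[OF E_normal sigmaz2_pos]
lemmas eps_moments = distributed_normal_moments[OF eps_normal sigma2_pos]

lemma integral_mult_indep_blocks:
  fixes f g :: "'w \<Rightarrow> real"
  assumes JK: "J \<subseteq> noise_index n" "K \<subseteq> noise_index n" "J \<inter> K = {}"
    and F: "F \<in> borel_measurable (PiM J (\<lambda>_. borel))" and G: "G \<in> borel_measurable (PiM K (\<lambda>_. borel))"
    and f: "\<And>\<omega>. f \<omega> = F (\<lambda>j\<in>J. noise_family E eps n j \<omega>)"
    and g: "\<And>\<omega>. g \<omega> = G (\<lambda>j\<in>K. noise_family E eps n j \<omega>)"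
    and integrable: "integrable M f" "integrable M g"
  shows "integrable M (\<lambda>\<omega>. f \<omega> * g \<omega>)" "(\<integral>\<omega>. f \<omega> * g \<omega> \<partial>M) = (\<integral>\<omega>. f \<omega> \<partial>M) * (\<integral>\<omega>. g \<omega> \<partial>M)"
proof -
  have "indep_var borel (F \<circ> (\<lambda>\<omega>. \<lambda>j\<in>J. noise_family E eps n j \<omega>)) borel (G \<circ> (\<lambda>\<omega>. \<lambda>j\<in>K. noise_family E eps n j \<omega>))"
    by (intro indep_var_compose[OF indep_var_restrict[OF indep JK(3,1,2)] F G])
  moreover have "f = F \<circ> (\<lambda>\<omega>. \<lambda>j\<in>J. noise_family E eps n j \<omega>)" "g = G \<circ> (\<lambda>\<omega>. \<lambda>j\<in>K. noise_family E eps n j \<omega>)"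
    using f g by auto
  ultimately have fg: "indep_var borel f borel g"
    by simp
  show "integrable M (\<lambda>\<omega>. f \<omega> * g \<omega>)"
    by (rule indep_var_integrable[OF fg integrable])
  show "(\<integral>\<omega>. f \<omega> * g \<omega> \<partial>M) = (\<integral>\<omega>. f \<omega> \<partial>M) * (\<integral>\<omega>. g \<omega> \<partial>M)"
    by (rule indep_var_lebesgue_integral[OF fg integrable])
qed

lemma integral_mult_indep_entries:
  fixes f g :: "real \<Rightarrow> real"
  assumes "s \<in> noise_index n" "t \<in> noise_index n" "s \<noteq> t"
    and [measurable]: "f \<in> borel_measurable borel" "g \<in> borel_measurable borel"
    and "integrable M (\<lambda>\<omega>. f (noise_family E eps n s \<omega>))" "integrable M (\<lambda>\<omega>. g (noise_family E eps n t \<omega>))"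
  shows "integrable M (\<lambda>\<omega>. f (noise_family E eps n s \<omega>) * g (noise_family E eps n t \<omega>))"
    "(\<integral>\<omega>. f (noise_family E eps n s \<omega>) * g (noise_family E eps n t \<omega>) \<partial>M)
      = (\<integral>\<omega>. f (noise_family E eps n s \<omega>) \<partial>M) * (\<integral>\<omega>. g (noise_family E eps n t \<omega>) \<partial>M)"
proof -
  have "(\<lambda>r. f (r s)) \<in> borel_measurable (PiM {s} (\<lambda>_. borel))" "(\<lambda>r. g (r t)) \<in> borel_measurable (PiM {t} (\<lambda>_. borel))"
    by measurable
  note blocks = integral_mult_indep_blocks[OF _ _ _ this]
  show "integrable M (\<lambda>\<omega>. f (noise_family E eps n s \<omega>) * g (noise_family E eps n t \<omega>))"
    "(\<integral>\<omega>. f (noise_family E eps n s \<omega>) * g (noise_family E eps n t \<omega>) \<partial>M)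
      = (\<integral>\<omega>. f (noise_family E eps n s \<omega>) \<partial>M) * (\<integral>\<omega>. g (noise_family E eps n t \<omega>) \<partial>M)"
    using assms by (auto intro!: blocks)
qed

lemma eps_mult_shifted_E_moments:
  assumes i: "i < n"
  shows "integrable M (\<lambda>\<omega>. eps n i \<omega> * (c + E n i k \<omega>))" "(\<integral>\<omega>. eps n i \<omega> * (c + E n i k \<omega>) \<partial>M) = 0"
    "integrable M (\<lambda>\<omega>. (eps n i \<omega> * (c + E n i k \<omega>))\<^sup>2)"
    "(\<integral>\<omega>. (eps n i \<omega> * (c + E n i k \<omega>))\<^sup>2 \<partial>M) = sigma2 * (c\<^sup>2 + sigmaz2)"
proof -
  have shifted: "(\<lambda>\<omega>. (c + E n i k \<omega>)\<^sup>2) = (\<lambda>\<omega>. c\<^sup>2 + 2 * c * E n i k \<omega> + (E n i k \<omega>)\<^sup>2)"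
    by (auto simp: fun_eq_iff power2_eq_square algebra_simps)
  have E1: "integrable M (E n i k)" "integrable M (\<lambda>\<omega>. (E n i k \<omega>)\<^sup>2)"
    using E_moments(2)[OF i, of k 1] E_moments(2)[OF i, of k 2] by simp_all
  have "integrable M (\<lambda>\<omega>. (c + E n i k \<omega>)\<^sup>2)" "(\<integral>\<omega>. (c + E n i k \<omega>)\<^sup>2 \<partial>M) = c\<^sup>2 + sigmaz2"
    using E1 unfolding shifted using E_moments(3,4)[OF i, of k] by (simp_all add: prob_space)
  note shifted_moments = this
  have eps_int: "integrable M (eps n i)" "integrable M (\<lambda>\<omega>. (eps n i \<omega>)\<^sup>2)"
    using eps_moments(2)[OF i, of 1] eps_moments(2)[OF i, of 2] by simp_all
  have "integrable M (\<lambda>\<omega>. c + E n i k \<omega>)"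
    using E1 by simp
  then show "integrable M (\<lambda>\<omega>. eps n i \<omega> * (c + E n i k \<omega>))"
    "(\<integral>\<omega>. eps n i \<omega> * (c + E n i k \<omega>) \<partial>M) = 0"
    using integral_mult_indep_entries[of "Inr i" n "Inl (i, k)" "\<lambda>x. x" "\<lambda>x. c + x"] eps_int
      eps_moments(3)[OF i] i by simp_all
  show "integrable M (\<lambda>\<omega>. (eps n i \<omega> * (c + E n i k \<omega>))\<^sup>2)"
    "(\<integral>\<omega>. (eps n i \<omega> * (c + E n i k \<omega>))\<^sup>2 \<partial>M) = sigma2 * (c\<^sup>2 + sigmaz2)"
    using integral_mult_indep_entries[of "Inr i" n "Inl (i, k)" "\<lambda>x. x\<^sup>2" "\<lambda>x. (c + x)\<^sup>2"] eps_int
      shifted_moments eps_moments(4)[OF i] i by (simp_all add: power_mult_distrib)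
qed

lemma eps_mult_ztilde_moments:
  fixes x :: "nat \<Rightarrow> real^'e" and Gam :: "real^'p^'e" and a :: "'p option" and n i :: nat
  assumes i: "i < n"
  defines "Y \<equiv> \<lambda>\<omega>. eps n i \<omega> * ztilde Gam x (\<lambda>i k. E n i k \<omega>) i $ a"
  shows "integrable M Y" "(\<integral>\<omega>. Y \<omega> \<partial>M) = 0" "integrable M (\<lambda>\<omega>. (Y \<omega>)\<^sup>2)"
    "(\<integral>\<omega>. (Y \<omega>)\<^sup>2 \<partial>M) = sigma2 * (case a of None \<Rightarrow> 1 | Some k \<Rightarrow> ((transpose Gam *v x i) $ k)\<^sup>2 + sigmaz2)"
proof -
  have "integrable M Y \<and> (\<integral>\<omega>. Y \<omega> \<partial>M) = 0 \<and> integrable M (\<lambda>\<omega>. (Y \<omega>)\<^sup>2) \<and>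
    (\<integral>\<omega>. (Y \<omega>)\<^sup>2 \<partial>M) = sigma2 * (case a of None \<Rightarrow> 1 | Some k \<Rightarrow> ((transpose Gam *v x i) $ k)\<^sup>2 + sigmaz2)"
  proof (cases a)
    case None
    then show ?thesis
      unfolding Y_def using eps_moments(2)[OF i, of 1] eps_moments(2-4)[OF i] by simp
  next
    case (Some k)
    then show ?thesis
      unfolding Y_def using eps_mult_shifted_E_moments[OF i, of "(transpose Gam *v x i) $ k" k] by simp
  qed
  then show "integrable M Y" "(\<integral>\<omega>. Y \<omega> \<partial>M) = 0" "integrable M (\<lambda>\<omega>. (Y \<omega>)\<^sup>2)"
    "(\<integral>\<omega>. (Y \<omega>)\<^sup>2 \<partial>M) = sigma2 * (case a of None \<Rightarrow> 1 | Some k \<Rightarrow> ((transpose Gam *v x i) $ k)\<^sup>2 + sigmaz2)"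
    by simp_all
qed

lemma eps_mult_ztilde_uncorrelated:
  fixes x :: "nat \<Rightarrow> real^'e" and Gam :: "real^'p^'e"
  assumes "i < n" "j < n" "i \<noteq> j"
  shows "(\<integral>\<omega>. eps n i \<omega> * ztilde Gam x (\<lambda>i k. E n i k \<omega>) i $ a * (eps n j \<omega> * ztilde Gam x (\<lambda>i k. E n i k \<omega>) j $ a) \<partial>M)
    = 0"
proof -
  define row where "row i = insert (Inr i) (Inl ` ({i} \<times> (UNIV :: 'p set)))" for i :: nat
  define F where "F i r = r (Inr i) * (case a of None \<Rightarrow> 1 | Some k \<Rightarrow> (transpose Gam *v x i) $ k + r (Inl (i, k)))"
    for i and r :: "nat \<times> 'p + nat \<Rightarrow> real"
  have F: "F i \<in> borel_measurable (PiM (row i) (\<lambda>_. borel))" for i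
    unfolding F_def row_def by (cases a) simp_all
  have rows: "row i \<subseteq> noise_index n" "row j \<subseteq> noise_index n" "row i \<inter> row j = {}"
    using assms by (auto simp: row_def)
  have F_eq: "eps n i \<omega> * ztilde Gam x (\<lambda>i k. E n i k \<omega>) i $ a = F i (\<lambda>t\<in>row i. noise_family E eps n t \<omega>)"
    for i \<omega>
    by (cases a) (auto simp: F_def row_def)
  have "(\<integral>\<omega>. eps n i \<omega> * ztilde Gam x (\<lambda>i k. E n i k \<omega>) i $ a * (eps n j \<omega> * ztilde Gam x (\<lambda>i k. E n i k \<omega>) j $ a) \<partial>M)
    = (\<integral>\<omega>. eps n i \<omega> * ztilde Gam x (\<lambda>i k. E n i k \<omega>) i $ a \<partial>M) * (\<integral>\<omega>. eps n j \<omega> * ztilde Gam x (\<lambda>i k. E n i k \<omega>) j $ a \<partial>M)"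
    using integral_mult_indep_blocks(2)[where f="\<lambda>\<omega>. eps n i \<omega> * ztilde Gam x (\<lambda>i k. E n i k \<omega>) i $ a"
        and g="\<lambda>\<omega>. eps n j \<omega> * ztilde Gam x (\<lambda>i k. E n i k \<omega>) j $ a" and F="F i" and G="F j",
        OF rows F F F_eq F_eq eps_mult_ztilde_moments(1)[OF assms(1)] eps_mult_ztilde_moments(1)[OF assms(2)]] .
  then show ?thesis
    using eps_mult_ztilde_moments(2)[OF assms(1), where x=x and Gam=Gam and a=a] by simp
qed

lemma expectation_sq_sum_eps_mult_ztilde:
  fixes x :: "nat \<Rightarrow> real^'e" and Gam :: "real^'p^'e" and a :: "'p option" and n :: nat
  defines "Y \<equiv> \<lambda>j \<omega>. eps n j \<omega> * ztilde Gam x (\<lambda>i k. E n i k \<omega>) j $ a"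
  shows "integrable M (\<lambda>\<omega>. (\<Sum>j<n. Y j \<omega>)\<^sup>2)"
    "(\<integral>\<omega>. (\<Sum>j<n. Y j \<omega>)\<^sup>2 \<partial>M)
      = (\<Sum>j<n. sigma2 * (case a of None \<Rightarrow> 1 | Some k \<Rightarrow> ((transpose Gam *v x j) $ k)\<^sup>2 + sigmaz2))"
proof -
  note moments = eps_mult_ztilde_moments[where n=n and x=x and Gam=Gam]
  have "Y j \<in> borel_measurable M" "integrable M (\<lambda>\<omega>. (Y j \<omega>)\<^sup>2)" if "j \<in> {..<n}" for j
    unfolding Y_def using moments(1,3) that by auto
  moreover have "(\<integral>\<omega>. Y i \<omega> * Y j \<omega> \<partial>M) = 0" if "i \<in> {..<n}" "j \<in> {..<n}" "i \<noteq> j" for i j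
    using eps_mult_ztilde_uncorrelated that unfolding Y_def by simp
  ultimately show "integrable M (\<lambda>\<omega>. (\<Sum>j<n. Y j \<omega>)\<^sup>2)"
    "(\<integral>\<omega>. (\<Sum>j<n. Y j \<omega>)\<^sup>2 \<partial>M)
      = (\<Sum>j<n. sigma2 * (case a of None \<Rightarrow> 1 | Some k \<Rightarrow> ((transpose Gam *v x j) $ k)\<^sup>2 + sigmaz2))"
    using moments(4) integral_square_sum_uncorrelated[of "{..<n}" Y M] unfolding Y_def by simp_all
qed

lemma expectation_norm_cross_ztilde:
  fixes x :: "nat \<Rightarrow> real^'e" and Gam :: "real^'p^'e"
  shows "integrable M (\<lambda>\<omega>. (norm (cross (ztilde Gam x (\<lambda>i k. E n i k \<omega>)) (\<lambda>i. eps n i \<omega>) {..<n}))\<^sup>2)"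
    "(\<integral>\<omega>. (norm (cross (ztilde Gam x (\<lambda>i k. E n i k \<omega>)) (\<lambda>i. eps n i \<omega>) {..<n}))\<^sup>2 \<partial>M)
      = sigma2 * (\<Sum>j<n. 1 + (norm (transpose Gam *v x j))\<^sup>2 + real CARD('p) * sigmaz2)"
proof -
  note coordinates = expectation_sq_sum_eps_mult_ztilde[where n=n and x=x and Gam=Gam]
  show "integrable M (\<lambda>\<omega>. (norm (cross (ztilde Gam x (\<lambda>i k. E n i k \<omega>)) (\<lambda>i. eps n i \<omega>) {..<n}))\<^sup>2)"
    unfolding norm_cross_squared using coordinates(1) by (intro Bochner_Integration.integrable_sum) blast
  have "(\<integral>\<omega>. (norm (cross (ztilde Gam x (\<lambda>i k. E n i k \<omega>)) (\<lambda>i. eps n i \<omega>) {..<n}))\<^sup>2 \<partial>M)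
      = (\<Sum>a\<in>UNIV. \<Sum>j<n. sigma2 * (case a of None \<Rightarrow> 1 | Some k \<Rightarrow> ((transpose Gam *v x j) $ k)\<^sup>2 + sigmaz2))"
    unfolding norm_cross_squared using coordinates by (subst Bochner_Integration.integral_sum) auto
  also have "\<dots> = sigma2 * (\<Sum>j<n. \<Sum>a\<in>UNIV. case a of None \<Rightarrow> 1 | Some k \<Rightarrow> ((transpose Gam *v x j) $ k)\<^sup>2 + sigmaz2)"
    by (subst sum.swap) (simp add: sum_distrib_left)
  finally show "(\<integral>\<omega>. (norm (cross (ztilde Gam x (\<lambda>i k. E n i k \<omega>)) (\<lambda>i. eps n i \<omega>) {..<n}))\<^sup>2 \<partial>M)
      = sigma2 * (\<Sum>j<n. 1 + (norm (transpose Gam *v x j))\<^sup>2 + real CARD('p) * sigmaz2)"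
    by (simp only: sum_ztilde_variances)
qed

lemma expectation_weighted_ztilde:
  fixes x :: "nat \<Rightarrow> real^'e" and Gam :: "real^'p^'e"
  shows "integrable M (\<lambda>\<omega>. \<Sum>i<n. (eps n i \<omega>)\<^sup>2 * (norm (ztilde Gam x (\<lambda>i k. E n i k \<omega>) i))\<^sup>2)"
    "(\<integral>\<omega>. (\<Sum>i<n. (eps n i \<omega>)\<^sup>2 * (norm (ztilde Gam x (\<lambda>i k. E n i k \<omega>) i))\<^sup>2) \<partial>M)
      = sigma2 * (\<Sum>j<n. 1 + (norm (transpose Gam *v x j))\<^sup>2 + real CARD('p) * sigmaz2)"
proof -
  have expand: "(eps n i \<omega>)\<^sup>2 * (norm (ztilde Gam x (\<lambda>i k. E n i k \<omega>) i))\<^sup>2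
      = (\<Sum>a\<in>UNIV. (eps n i \<omega> * ztilde Gam x (\<lambda>i k. E n i k \<omega>) i $ a)\<^sup>2)" for i \<omega>
    by (simp add: norm_squared_vec[of "ztilde Gam x (\<lambda>i k. E n i k \<omega>) i"] sum_distrib_left power_mult_distrib)
  note moments = eps_mult_ztilde_moments[where n=n and x=x and Gam=Gam]
  show "integrable M (\<lambda>\<omega>. \<Sum>i<n. (eps n i \<omega>)\<^sup>2 * (norm (ztilde Gam x (\<lambda>i k. E n i k \<omega>) i))\<^sup>2)"
    unfolding expand using moments(3) by (intro Bochner_Integration.integrable_sum) auto
  have "(\<integral>\<omega>. (\<Sum>i<n. (eps n i \<omega>)\<^sup>2 * (norm (ztilde Gam x (\<lambda>i k. E n i k \<omega>) i))\<^sup>2) \<partial>M)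
      = (\<Sum>i<n. \<Sum>a\<in>UNIV. sigma2 * (case a of None \<Rightarrow> 1 | Some k \<Rightarrow> ((transpose Gam *v x i) $ k)\<^sup>2 + sigmaz2))"
    unfolding expand using moments(3,4)
    by (simp add: Bochner_Integration.integral_sum Bochner_Integration.integrable_sum)
  also have "\<dots> = sigma2 * (\<Sum>i<n. \<Sum>a\<in>UNIV. case a of None \<Rightarrow> 1 | Some k \<Rightarrow> ((transpose Gam *v x i) $ k)\<^sup>2 + sigmaz2)"
    by (simp add: sum_distrib_left)
  finally show "(\<integral>\<omega>. (\<Sum>i<n. (eps n i \<omega>)\<^sup>2 * (norm (ztilde Gam x (\<lambda>i k. E n i k \<omega>) i))\<^sup>2) \<partial>M)
      = sigma2 * (\<Sum>j<n. 1 + (norm (transpose Gam *v x j))\<^sup>2 + real CARD('p) * sigmaz2)"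
    by (simp only: sum_ztilde_variances)
qed

lemma fails_with_prob_le_sum_E:
  assumes t: "t > 0"
  shows "fails_with_prob_le M (sigmaz2 * (\<Sum>i<n. (c i)\<^sup>2) / t\<^sup>2) (\<lambda>\<omega>. \<bar>\<Sum>i<n. c i * E n i k \<omega>\<bar> \<le> t)"
proof -
  have "fails_with_prob_le M ((\<Sum>i<n. \<integral>\<omega>. (c i * E n i k \<omega>)\<^sup>2 \<partial>M) / t\<^sup>2) (\<lambda>\<omega>. \<bar>\<Sum>i<n. c i * E n i k \<omega>\<bar> \<le> t)"
  proof (rule fails_with_prob_le_Chebyshev[OF finite_lessThan _ _ _ t])
    show "(\<lambda>\<omega>. c i * E n i k \<omega>) \<in> borel_measurable M" if "i \<in> {..<n}" for i
      using E_moments(1) that by simp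
    show "integrable M (\<lambda>\<omega>. (c i * E n i k \<omega>)\<^sup>2)" if "i \<in> {..<n}" for i
      using E_moments(2)[of i n k 2] that by (simp add: power_mult_distrib)
    show "(\<integral>\<omega>. c i * E n i k \<omega> * (c j * E n j k \<omega>) \<partial>M) = 0"
      if "i \<in> {..<n}" "j \<in> {..<n}" "i \<noteq> j" for i j
      using integral_mult_indep_entries(2)[of "Inl (i, k)" n "Inl (j, k)" "\<lambda>x. c i * x" "\<lambda>x. c j * x"]
        E_moments(2)[of _ n k 1] E_moments(3) that by simp
  qed
  moreover have "(\<Sum>i<n. \<integral>\<omega>. (c i * E n i k \<omega>)\<^sup>2 \<partial>M) = sigmaz2 * (\<Sum>i<n. (c i)\<^sup>2)"
    using E_moments(4) by (simp add: power_mult_distrib sum_distrib_left mult.commute)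
  ultimately show ?thesis
    by simp
qed

lemma E_product_moments:
  fixes k l :: 'p and n i :: nat
  assumes i: "i < n"
  defines "Y \<equiv> \<lambda>\<omega>. E n i k \<omega> * E n i l \<omega> - (if k = l then sigmaz2 else 0)"
  shows "integrable M Y" "(\<integral>\<omega>. Y \<omega> \<partial>M) = 0" "integrable M (\<lambda>\<omega>. (Y \<omega>)\<^sup>2)"
    "(\<integral>\<omega>. (Y \<omega>)\<^sup>2 \<partial>M) \<le> 2 * sigmaz2\<^sup>2"
proof -
  note moments = E_moments[OF i]
  have "integrable M Y \<and> (\<integral>\<omega>. Y \<omega> \<partial>M) = 0 \<and> integrable M (\<lambda>\<omega>. (Y \<omega>)\<^sup>2) \<and> (\<integral>\<omega>. (Y \<omega>)\<^sup>2 \<partial>M) \<le> 2 * sigmaz2\<^sup>2"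
  proof (cases "k = l")
    case True
    have "(\<lambda>\<omega>. (Y \<omega>)\<^sup>2) = (\<lambda>\<omega>. E n i k \<omega> ^ 4 - 2 * sigmaz2 * (E n i k \<omega>)\<^sup>2 + sigmaz2\<^sup>2)"
      using True by (auto simp: Y_def fun_eq_iff power2_eq_square power4_eq_xxxx algebra_simps)
    then show ?thesis
      using True moments(2)[of k 2] moments(2)[of k 4] moments(4,5)
      by (simp add: Y_def power2_eq_square prob_space)
  next
    case False
    note independent = integral_mult_indep_entries[of "Inl (i, k)" n "Inl (i, l)"]
    have "integrable M Y" "(\<integral>\<omega>. Y \<omega> \<partial>M) = 0"
      using False independent[of "\<lambda>x. x" "\<lambda>x. x"] i moments(2)[of k 1] moments(2)[of l 1] moments(3)
      by (simp_all add: Y_def)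
    moreover have "integrable M (\<lambda>\<omega>. (Y \<omega>)\<^sup>2)" "(\<integral>\<omega>. (Y \<omega>)\<^sup>2 \<partial>M) = sigmaz2 * sigmaz2"
      using False independent[of "\<lambda>x. x\<^sup>2" "\<lambda>x. x\<^sup>2"] i moments(2)[of k 2] moments(2)[of l 2] moments(4)
      by (simp_all add: Y_def power_mult_distrib)
    moreover have "sigmaz2 * sigmaz2 \<le> 2 * sigmaz2\<^sup>2"
      by (simp add: power2_eq_square)
    ultimately show ?thesis
      by simp
  qed
  then show "integrable M Y" "(\<integral>\<omega>. Y \<omega> \<partial>M) = 0" "integrable M (\<lambda>\<omega>. (Y \<omega>)\<^sup>2)"
    "(\<integral>\<omega>. (Y \<omega>)\<^sup>2 \<partial>M) \<le> 2 * sigmaz2\<^sup>2"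
    by simp_all
qed

lemma fails_with_prob_le_covariance_E:
  assumes t: "t > 0"
  shows "fails_with_prob_le M (real n * (2 * sigmaz2\<^sup>2) / t\<^sup>2)
    (\<lambda>\<omega>. \<bar>\<Sum>i<n. (E n i k \<omega> * E n i l \<omega> - (if k = l then sigmaz2 else 0))\<bar> \<le> t)"
proof -
  define d where "d = (if k = l then sigmaz2 else 0)"
  define Y where "Y i = (\<lambda>\<omega>. E n i k \<omega> * E n i l \<omega> - d)" for i
  define F where "F i r = r (Inl (i, k)) * r (Inl (i, l)) - d" for i and r :: "nat \<times> 'p + nat \<Rightarrow> real"
  have moments: "integrable M (Y i)" "(\<integral>\<omega>. Y i \<omega> \<partial>M) = 0" "integrable M (\<lambda>\<omega>. (Y i \<omega>)\<^sup>2)"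
    "(\<integral>\<omega>. (Y i \<omega>)\<^sup>2 \<partial>M) \<le> 2 * sigmaz2\<^sup>2" if "i < n" for i
    using E_product_moments[OF that, of k l] unfolding Y_def d_def by simp_all
  have "fails_with_prob_le M ((\<Sum>i<n. \<integral>\<omega>. (Y i \<omega>)\<^sup>2 \<partial>M) / t\<^sup>2) (\<lambda>\<omega>. \<bar>\<Sum>i<n. Y i \<omega>\<bar> \<le> t)"
  proof (rule fails_with_prob_le_Chebyshev[OF finite_lessThan _ _ _ t])
    show "Y i \<in> borel_measurable M" "integrable M (\<lambda>\<omega>. (Y i \<omega>)\<^sup>2)" if "i \<in> {..<n}" for i
      using moments(1,3) that by auto
  next
    fix i j assume i: "i \<in> {..<n}" and j: "j \<in> {..<n}" and "i \<noteq> j"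
    have blocks: "{Inl (i, k), Inl (i, l)} \<subseteq> noise_index n" "{Inl (j, k), Inl (j, l)} \<subseteq> noise_index n"
      "{Inl (i, k), Inl (i, l)} \<inter> {Inl (j, k), Inl (j, l)} = {}"
      using i j \<open>i \<noteq> j\<close> by auto
    have F: "F i \<in> borel_measurable (PiM {Inl (i, k), Inl (i, l)} (\<lambda>_. borel))"
      "F j \<in> borel_measurable (PiM {Inl (j, k), Inl (j, l)} (\<lambda>_. borel))"
      unfolding F_def by measurable
    have "Y i \<omega> = F i (\<lambda>s\<in>{Inl (i, k), Inl (i, l)}. noise_family E eps n s \<omega>)"
      "Y j \<omega> = F j (\<lambda>s\<in>{Inl (j, k), Inl (j, l)}. noise_family E eps n s \<omega>)" for \<omega>
      by (simp_all add: Y_def F_def)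
    from integral_mult_indep_blocks(2)[OF blocks F this moments(1) moments(1)] i j
    show "(\<integral>\<omega>. Y i \<omega> * Y j \<omega> \<partial>M) = 0"
      using moments(2) by simp
  qed
  moreover have "(\<Sum>i<n. \<integral>\<omega>. (Y i \<omega>)\<^sup>2 \<partial>M) \<le> real n * (2 * sigmaz2\<^sup>2)"
    using sum_bounded_above[of "{..<n}" "\<lambda>i. \<integral>\<omega>. (Y i \<omega>)\<^sup>2 \<partial>M" "2 * sigmaz2\<^sup>2"] moments(4) by simp
  ultimately show ?thesis
    unfolding Y_def d_def by (elim fails_with_prob_le_mono) (simp_all add: divide_right_mono)
qed

lemma fails_with_prob_le_max_E:
  assumes t: "t > 0"
  shows "fails_with_prob_le M (real n * real CARD('p) * (3 * sigmaz2\<^sup>2) / t\<^sup>2) (\<lambda>\<omega>. \<forall>i<n. \<forall>k. (E n i k \<omega>)\<^sup>2 \<le> t)"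
proof -
  have entry: "fails_with_prob_le M (3 * sigmaz2\<^sup>2 / t\<^sup>2) (\<lambda>\<omega>. (E n i k \<omega>)\<^sup>2 \<le> t)" if "i < n" for i k
  proof -
    have "fails_with_prob_le M ((\<integral>\<omega>. E n i k \<omega> ^ 4 \<partial>M) / t\<^sup>2) (\<lambda>\<omega>. E n i k \<omega> ^ 4 \<le> t\<^sup>2)"
      using E_moments(2)[OF that, of k 4] t by (intro fails_with_prob_le_Markov) auto
    then show ?thesis
      unfolding E_moments(5)[OF that]
    proof (rule fails_with_prob_le_mono)
      fix \<omega> assume "E n i k \<omega> ^ 4 \<le> t\<^sup>2"
      then have "((E n i k \<omega>)\<^sup>2)\<^sup>2 \<le> t\<^sup>2"
        by (simp add: power_mult[symmetric])
      then show "(E n i k \<omega>)\<^sup>2 \<le> t"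
        by (rule power2_le_imp_le) (use t in simp)
    qed simp
  qed
  have "fails_with_prob_le M (\<Sum>k\<in>(UNIV :: 'p set). 3 * sigmaz2\<^sup>2 / t\<^sup>2) (\<lambda>\<omega>. \<forall>k\<in>UNIV. (E n i k \<omega>)\<^sup>2 \<le> t)"
    if "i \<in> {..<n}" for i
    using fails_with_prob_le_all[where I=UNIV and r="\<lambda>k. 3 * sigmaz2\<^sup>2 / t\<^sup>2" and M=M
        and P="\<lambda>k \<omega>. (E n i k \<omega>)\<^sup>2 \<le> t"] entry that
    by simp
  then have "fails_with_prob_le M (\<Sum>i<n. \<Sum>k\<in>(UNIV :: 'p set). 3 * sigmaz2\<^sup>2 / t\<^sup>2)
      (\<lambda>\<omega>. \<forall>i\<in>{..<n}. \<forall>k\<in>UNIV. (E n i k \<omega>)\<^sup>2 \<le> t)"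
    using fails_with_prob_le_all[where I="{..<n}" and r="\<lambda>i. \<Sum>k\<in>(UNIV :: 'p set). 3 * sigmaz2\<^sup>2 / t\<^sup>2" and M=M
        and P="\<lambda>i \<omega>. \<forall>k\<in>UNIV. (E n i k \<omega>)\<^sup>2 \<le> t"] by simp
  then show ?thesis
    by (rule fails_with_prob_le_mono) auto
qed

lemma asymp_almost_surely_sum_E:
  assumes \<delta>: "\<delta> > 0"
  shows "asymp_almost_surely M (\<lambda>n \<omega>. \<bar>\<Sum>i<n. E n i k \<omega>\<bar> \<le> \<delta> * real n)"
proof (rule asymp_almost_surely_if_fails_with_prob_le)
  show "\<forall>\<^sub>F n in sequentially. fails_with_prob_le M (sigmaz2 * (\<Sum>i<n. 1\<^sup>2) / (\<delta> * real n)\<^sup>2)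
      (\<lambda>\<omega>. \<bar>\<Sum>i<n. E n i k \<omega>\<bar> \<le> \<delta> * real n)"
    using eventually_gt_at_top[of 0]
    by eventually_elim (use \<delta> fails_with_prob_le_sum_E[where c="\<lambda>_. 1"] in simp)
  show "\<forall>\<^sub>F n in sequentially. sigmaz2 * (\<Sum>i<n. 1\<^sup>2) / (\<delta> * real n)\<^sup>2 \<le> sigmaz2 / \<delta>\<^sup>2 / real n"
    using eventually_gt_at_top[of 0] by eventually_elim (use \<delta> in \<open>simp add: power2_eq_square field_simps\<close>)
qed

lemma asymp_almost_surely_sum_design_E:
  fixes w :: "nat \<Rightarrow> nat \<Rightarrow> 'p \<Rightarrow> real"
  assumes design: "\<forall>\<^sub>F n in sequentially. (\<Sum>i<n. \<Sum>k\<in>UNIV. (w n i k)\<^sup>2) \<le> K * real n" and \<delta>: "\<delta> > 0"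
  shows "asymp_almost_surely M (\<lambda>n \<omega>. \<bar>\<Sum>i<n. w n i k * E n i l \<omega>\<bar> \<le> \<delta> * real n)"
proof (rule asymp_almost_surely_if_fails_with_prob_le)
  show "\<forall>\<^sub>F n in sequentially. fails_with_prob_le M (sigmaz2 * (\<Sum>i<n. (w n i k)\<^sup>2) / (\<delta> * real n)\<^sup>2)
      (\<lambda>\<omega>. \<bar>\<Sum>i<n. w n i k * E n i l \<omega>\<bar> \<le> \<delta> * real n)"
    using eventually_gt_at_top[of 0]
    by eventually_elim (use \<delta> fails_with_prob_le_sum_E[where c="\<lambda>i. w _ i k"] in simp)
  show "\<forall>\<^sub>F n in sequentially. sigmaz2 * (\<Sum>i<n. (w n i k)\<^sup>2) / (\<delta> * real n)\<^sup>2 \<le> sigmaz2 * K / \<delta>\<^sup>2 / real n"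
    using design eventually_gt_at_top[of 0]
  proof eventually_elim
    case (elim n)
    have "(\<Sum>i<n. (w n i k)\<^sup>2) \<le> (\<Sum>i<n. \<Sum>k\<in>UNIV. (w n i k)\<^sup>2)"
      by (intro sum_mono member_le_sum) auto
    then have "sigmaz2 * (\<Sum>i<n. (w n i k)\<^sup>2) \<le> sigmaz2 * (K * real n)"
      using elim(1) sigmaz2_pos by (intro mult_left_mono) auto
    then show ?case
      using elim(2) \<delta> by (simp add: divide_right_mono power2_eq_square field_simps)
  qed
qed

lemma asymp_almost_surely_covariance_E:
  assumes \<delta>: "\<delta> > 0"
  shows "asymp_almost_surely M (\<lambda>n \<omega>.
    \<bar>\<Sum>i<n. (E n i k \<omega> * E n i l \<omega> - (if k = l then sigmaz2 else 0))\<bar> \<le> \<delta> * real n)"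
proof (rule asymp_almost_surely_if_fails_with_prob_le)
  show "\<forall>\<^sub>F n in sequentially. fails_with_prob_le M (real n * (2 * sigmaz2\<^sup>2) / (\<delta> * real n)\<^sup>2)
      (\<lambda>\<omega>. \<bar>\<Sum>i<n. (E n i k \<omega> * E n i l \<omega> - (if k = l then sigmaz2 else 0))\<bar> \<le> \<delta> * real n)"
    using eventually_gt_at_top[of 0] by eventually_elim (use \<delta> fails_with_prob_le_covariance_E in simp)
  show "\<forall>\<^sub>F n in sequentially. real n * (2 * sigmaz2\<^sup>2) / (\<delta> * real n)\<^sup>2 \<le> 2 * sigmaz2\<^sup>2 / \<delta>\<^sup>2 / real n"
    using eventually_gt_at_top[of 0] by eventually_elim (use \<delta> in \<open>simp add: power2_eq_square field_simps\<close>)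
qed

lemma asymp_almost_surely_noise_concentrated:
  fixes w :: "nat \<Rightarrow> nat \<Rightarrow> 'p \<Rightarrow> real"
  assumes "\<forall>\<^sub>F n in sequentially. (\<Sum>i<n. \<Sum>k\<in>UNIV. (w n i k)\<^sup>2) \<le> K * real n" and "\<delta> > 0"
  shows "asymp_almost_surely M (\<lambda>n \<omega>. noise_concentrated n sigmaz2 \<delta> (w n) (\<lambda>i k. E n i k \<omega>))"
  unfolding noise_concentrated_def
  using assms asymp_almost_surely_sum_E asymp_almost_surely_sum_design_E asymp_almost_surely_covariance_E
  by (intro asymp_almost_surely_conj) (simp_all add: asymp_almost_surely_all[of UNIV, simplified])

lemma asymp_almost_surely_gram_ztilde_ge:
  fixes X :: "nat \<Rightarrow> nat \<Rightarrow> real^'e" and Gam :: "real^'p^'e"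
  assumes K: "K \<ge> 0" and design: "\<forall>\<^sub>F n in sequentially. (\<Sum>i<n. (norm (transpose Gam *v X n i))\<^sup>2) \<le> K * real n"
  shows "asymp_almost_surely M (\<lambda>n \<omega>. \<forall>u. sigmaz2 / (8 * (K + sigmaz2 + 1)) * real n * (norm u)\<^sup>2
    \<le> u \<bullet> (gram (ztilde Gam (X n) (\<lambda>i k. E n i k \<omega>)) {..<n} *v u))"
proof -
  define \<mu> where "\<mu> = sigmaz2 / (4 * (K + sigmaz2 + 1))"
  define q where "q = 3 * (real CARD('p))\<^sup>2 + 2 * real CARD('p)"
  define \<delta> where "\<delta> = \<mu> / (2 * q)"
  define w where "w n i k = (transpose Gam *v X n i) $ k" for n i k
  have "q > 0"
    unfolding q_def using finite_UNIV_card_ge_0[where 'a='p] by (simp add: add_pos_pos)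
  moreover have "\<mu> > 0"
    using sigmaz2_pos K by (simp add: \<mu>_def)
  ultimately have \<delta>: "\<delta> > 0" "q * \<delta> = \<mu> / 2"
    unfolding \<delta>_def by simp_all
  have "\<forall>\<^sub>F n in sequentially. (\<Sum>i<n. \<Sum>k\<in>UNIV. (w n i k)\<^sup>2) \<le> K * real n"
    using design by (simp add: w_def norm_squared_vec)
  then have "asymp_almost_surely M (\<lambda>n \<omega>. (\<Sum>i<n. \<Sum>k\<in>UNIV. (w n i k)\<^sup>2) \<le> K * real n \<and>
      noise_concentrated n sigmaz2 \<delta> (w n) (\<lambda>i k. E n i k \<omega>))"
    using \<delta>(1) by (intro asymp_almost_surely_conj asymp_almost_surely_const asymp_almost_surely_noise_concentrated)
  then show ?thesis
  proof (rule asymp_almost_surely_mono)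
    fix n \<omega>
    assume "(\<Sum>i<n. \<Sum>k\<in>UNIV. (w n i k)\<^sup>2) \<le> K * real n \<and> noise_concentrated n sigmaz2 \<delta> (w n) (\<lambda>i k. E n i k \<omega>)"
    then have "(\<mu> - q * \<delta>) * real n * (norm u)\<^sup>2 \<le> u \<bullet> (gram (ztilde Gam (X n) (\<lambda>i k. E n i k \<omega>)) {..<n} *v u)" for u
      unfolding \<mu>_def q_def using K sigmaz2_pos
      by (intro gram_augmented_design_ge[where w="w n"]) (auto simp: w_def)
    moreover have "\<mu> - q * \<delta> = sigmaz2 / (8 * (K + sigmaz2 + 1))"
    proof -
      define c where "c = K + sigmaz2 + 1"
      have "c > 0"
        using K sigmaz2_pos by (simp add: c_def)
      then show ?thesis
        unfolding \<delta>(2) \<mu>_def c_def[symmetric] by (simp add: field_simps)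
    qed
    ultimately show "\<forall>u. sigmaz2 / (8 * (K + sigmaz2 + 1)) * real n * (norm u)\<^sup>2
        \<le> u \<bullet> (gram (ztilde Gam (X n) (\<lambda>i k. E n i k \<omega>)) {..<n} *v u)"
      by simp
  qed
qed

lemma asymp_almost_surely_rows_ztilde_le:
  fixes X :: "nat \<Rightarrow> nat \<Rightarrow> real^'e" and Gam :: "real^'p^'e"
  assumes design: "\<And>c. c > 0 \<Longrightarrow> \<forall>\<^sub>F n in sequentially. \<forall>i<n. (norm (transpose Gam *v X n i))\<^sup>2 \<le> c * real n"
    and d: "d > 0"
  shows "asymp_almost_surely M (\<lambda>n \<omega>. \<forall>i<n. (norm (ztilde Gam (X n) (\<lambda>i k. E n i k \<omega>) i))\<^sup>2 \<le> d * real n)"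
proof -
  define p where "p = real CARD('p)"
  define t where "t = d / (4 * p)"
  have "p \<ge> 1"
    unfolding p_def using finite_UNIV_card_ge_0[where 'a='p] by simp
  then have t: "t > 0" "p * t = d / 4"
    using d by (simp_all add: t_def)
  have noise: "asymp_almost_surely M (\<lambda>n \<omega>. \<forall>i<n. \<forall>k. (E n i k \<omega>)\<^sup>2 \<le> t * real n)"
  proof (rule asymp_almost_surely_if_fails_with_prob_le)
    show "\<forall>\<^sub>F n in sequentially. fails_with_prob_le M (real n * p * (3 * sigmaz2\<^sup>2) / (t * real n)\<^sup>2)
        (\<lambda>\<omega>. \<forall>i<n. \<forall>k. (E n i k \<omega>)\<^sup>2 \<le> t * real n)"
      using eventually_gt_at_top[of 0] by eventually_elim (use t in \<open>simp add: p_def fails_with_prob_le_max_E\<close>)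
    show "\<forall>\<^sub>F n in sequentially. real n * p * (3 * sigmaz2\<^sup>2) / (t * real n)\<^sup>2 \<le> p * (3 * sigmaz2\<^sup>2) / t\<^sup>2 / real n"
      using eventually_gt_at_top[of 0] by eventually_elim (use t in \<open>simp add: power2_eq_square field_simps\<close>)
  qed
  have "\<forall>\<^sub>F n in sequentially. 4 / d \<le> real n"
    using filterlim_real_sequentially by (simp add: filterlim_at_top)
  with design[of "d / 8"] d have "asymp_almost_surely M (\<lambda>n \<omega>. 1 \<le> d / 4 * real n \<and>
      (\<forall>i<n. (norm (transpose Gam *v X n i))\<^sup>2 \<le> d / 8 * real n))"
    by (intro asymp_almost_surely_const) (auto elim: eventually_elim2 simp: field_simps)
  from this noise have "asymp_almost_surely M (\<lambda>n \<omega>. (1 \<le> d / 4 * real n \<and>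
      (\<forall>i<n. (norm (transpose Gam *v X n i))\<^sup>2 \<le> d / 8 * real n)) \<and> (\<forall>i<n. \<forall>k. (E n i k \<omega>)\<^sup>2 \<le> t * real n))"
    by (rule asymp_almost_surely_conj)
  then show ?thesis
  proof (rule asymp_almost_surely_mono)
    fix n \<omega> assume good: "(1 \<le> d / 4 * real n \<and> (\<forall>i<n. (norm (transpose Gam *v X n i))\<^sup>2 \<le> d / 8 * real n)) \<and>
      (\<forall>i<n. \<forall>k. (E n i k \<omega>)\<^sup>2 \<le> t * real n)"
    show "\<forall>i<n. (norm (ztilde Gam (X n) (\<lambda>i k. E n i k \<omega>) i))\<^sup>2 \<le> d * real n"
    proof (intro allI impI)
      fix i assume "i < n"
      have "(\<Sum>k\<in>UNIV. (E n i k \<omega>)\<^sup>2) \<le> p * (t * real n)"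
        using sum_bounded_above[of UNIV "\<lambda>k. (E n i k \<omega>)\<^sup>2" "t * real n"] good \<open>i < n\<close> by (simp add: p_def)
      also have "p * (t * real n) = d / 4 * real n"
        by (simp add: t(2) mult.assoc[symmetric])
      finally have "2 * (\<Sum>k\<in>UNIV. (E n i k \<omega>)\<^sup>2) \<le> d / 2 * real n"
        by simp
      then show "(norm (ztilde Gam (X n) (\<lambda>i k. E n i k \<omega>) i))\<^sup>2 \<le> d * real n"
        using norm_ztilde_squared_le[of Gam "X n" "\<lambda>i k. E n i k \<omega>" i] good \<open>i < n\<close> by fastforce
    qed
  qed
qed

lemma expectation_ztilde_le:
  fixes x :: "nat \<Rightarrow> real^'e" and Gam :: "real^'p^'e"
  assumes "(\<Sum>j<n. (norm (transpose Gam *v x j))\<^sup>2) \<le> K * real n"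
  shows "sigma2 * (\<Sum>j<n. 1 + (norm (transpose Gam *v x j))\<^sup>2 + real CARD('p) * sigmaz2)
    \<le> sigma2 * (1 + K + real CARD('p) * sigmaz2) * real n"
  using mult_left_mono[OF assms less_imp_le[OF sigma2_pos]] by (simp add: sum.distrib algebra_simps)

lemma bounded_in_prob_norm_cross_ztilde:
  fixes X :: "nat \<Rightarrow> nat \<Rightarrow> real^'e" and Gam :: "real^'p^'e"
  assumes "\<forall>\<^sub>F n in sequentially. (\<Sum>i<n. (norm (transpose Gam *v X n i))\<^sup>2) \<le> K * real n"
  shows "bounded_in_prob M (\<lambda>n \<omega>. (norm (cross (ztilde Gam (X n) (\<lambda>i k. E n i k \<omega>)) (\<lambda>i. eps n i \<omega>) {..<n}))\<^sup>2 / real n)"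
proof (rule bounded_in_prob_if_expectation_le[where C="sigma2 * (1 + K + real CARD('p) * sigmaz2)"])
  show "\<forall>\<^sub>F n in sequentially. (\<integral>\<omega>. (norm (cross (ztilde Gam (X n) (\<lambda>i k. E n i k \<omega>)) (\<lambda>i. eps n i \<omega>) {..<n}))\<^sup>2 \<partial>M)
      \<le> sigma2 * (1 + K + real CARD('p) * sigmaz2) * real n"
    using assms by eventually_elim (unfold expectation_norm_cross_ztilde(2), rule expectation_ztilde_le)
qed (simp_all add: expectation_norm_cross_ztilde(1))

lemma bounded_in_prob_weighted_ztilde:
  fixes X :: "nat \<Rightarrow> nat \<Rightarrow> real^'e" and Gam :: "real^'p^'e"
  assumes "\<forall>\<^sub>F n in sequentially. (\<Sum>i<n. (norm (transpose Gam *v X n i))\<^sup>2) \<le> K * real n"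
  shows "bounded_in_prob M (\<lambda>n \<omega>. (\<Sum>i<n. (eps n i \<omega>)\<^sup>2 * (norm (ztilde Gam (X n) (\<lambda>i k. E n i k \<omega>) i))\<^sup>2) / real n)"
proof (rule bounded_in_prob_if_expectation_le[where C="sigma2 * (1 + K + real CARD('p) * sigmaz2)"])
  show "\<forall>\<^sub>F n in sequentially. (\<integral>\<omega>. (\<Sum>i<n. (eps n i \<omega>)\<^sup>2 * (norm (ztilde Gam (X n) (\<lambda>i k. E n i k \<omega>) i))\<^sup>2) \<partial>M)
      \<le> sigma2 * (1 + K + real CARD('p) * sigmaz2) * real n"
    using assms by eventually_elim (unfold expectation_weighted_ztilde(2), rule expectation_ztilde_le)
qed (simp_all add: expectation_weighted_ztilde(1) sum_nonneg)

lemma sum_sq_delta_loo_minus_delta_full_ztilde_vanishes: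
  fixes X :: "nat \<Rightarrow> nat \<Rightarrow> real^'e" and Gam :: "real^'p^'e"
  assumes lam: "\<And>n. lam n \<ge> 0"
    and gram_limit: "(\<lambda>n. (1 / real n) *\<^sub>R gram (X n) {..<n}) \<longlonglongrightarrow> S"
    and rows_small: "(\<lambda>n. MAX i\<in>{..<n}. norm (X n i)) \<in> o(\<lambda>n. real n powr (1/3))"
    and t: "t > 0"
  shows "asymp_almost_surely M (\<lambda>n \<omega>.
    (\<Sum>i<n. (delta_loo (ztilde Gam (X n) (\<lambda>i k. E n i k \<omega>)) (\<lambda>i. eps n i \<omega>) (lam n) n i
      - delta_full (ztilde Gam (X n) (\<lambda>i k. E n i k \<omega>)) (\<lambda>i. eps n i \<omega>) (lam n) n i)\<^sup>2) \<le> t)"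
proof -
  obtain K where K: "K \<ge> 0" "\<forall>\<^sub>F n in sequentially. (\<Sum>i<n. (norm (transpose Gam *v X n i))\<^sup>2) \<le> K * real n"
    using sum_sq_norm_design_le[OF gram_limit] by blast
  have \<mu>: "sigmaz2 / (8 * (K + sigmaz2 + 1)) > 0"
    using K sigmaz2_pos by simp
  show ?thesis
  proof (rule sum_sq_delta_loo_minus_delta_full_vanishes[OF lam \<mu> asymp_almost_surely_gram_ztilde_ge[OF K]])
    show "asymp_almost_surely M (\<lambda>n \<omega>. \<forall>i<n. (norm (ztilde Gam (X n) (\<lambda>i k. E n i k \<omega>) i))\<^sup>2 \<le> d * real n)"
      if "d > 0" for d
      using max_sq_norm_design_le[OF rows_small] that by (rule asymp_almost_surely_rows_ztilde_le)
  qed (use K(2) t in \<open>simp_all add: bounded_in_prob_norm_cross_ztilde bounded_in_prob_weighted_ztilde\<close>)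
qed

end

theorem lemma6:
  fixes M :: "'w measure"
    and X :: "nat \<Rightarrow> nat \<Rightarrow> real^'e"
    and Gam :: "real^'p^'e"
    and sigma2 sigmaz2 kappa :: real
    and lam :: "nat \<Rightarrow> real"
    and beta0 :: "nat \<Rightarrow> real^'e"
    and alpha0 :: "real^'e"
    and Sig :: "real^'e^'e"
    and Theta :: "real^'e"
    and E :: "nat \<Rightarrow> nat \<Rightarrow> 'p \<Rightarrow> 'w \<Rightarrow> real"
    and eps :: "nat \<Rightarrow> nat \<Rightarrow> 'w \<Rightarrow> real"
  assumes "prob_space M"
    and "sigma2 > 0" and "sigmaz2 > 0"
    and "\<forall>n. lam n \<ge> 0"
    and "\<forall>n. prob_space.indep_vars M (\<lambda>_. borel) (noise_family E eps n) (noise_index n)"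
    and "\<forall>n i k. i < n \<longrightarrow> distributed M lborel (E n i k) (normal_density 0 (sqrt sigmaz2))"
    and "\<forall>n i. i < n \<longrightarrow> distributed M lborel (eps n i) (normal_density 0 (sqrt sigma2))"
    and "kappa \<ge> 0"
    and "(\<lambda>n. lam n / real n) \<longlonglongrightarrow> kappa"
    and "(\<lambda>n. sqrt (real n) *\<^sub>R beta0 n) \<longlonglongrightarrow> alpha0"
    and "(\<lambda>n. (1 / real n) *\<^sub>R gram (X n) {..<n}) \<longlonglongrightarrow> Sig"
    and "pos_def Sig"
    and "(\<lambda>n. (1 / real n) *\<^sub>R (\<Sum>i<n. X n i)) \<longlonglongrightarrow> Theta"
    and "(\<lambda>n. MAX i\<in>{..<n}. norm (X n i)) \<in> o(\<lambda>n. real n powr (1/3))"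
  shows "\<forall>\<eta>>0. (\<lambda>n. measure M {\<omega> \<in> space M.
            sqrt (\<Sum>i<n. (delta_loo (ztilde Gam (X n) (\<lambda>i k. E n i k \<omega>)) (\<lambda>i. eps n i \<omega>) (lam n) n i
                        - delta_full (ztilde Gam (X n) (\<lambda>i k. E n i k \<omega>)) (\<lambda>i. eps n i \<omega>) (lam n) n i)\<^sup>2) > \<eta>})
          \<longlonglongrightarrow> 0"
proof (intro allI impI)
  fix \<eta> :: real assume "\<eta> > 0"
  have "gaussian_noise_model M E eps sigmaz2 sigma2"
    unfolding gaussian_noise_model_def gaussian_noise_model_axioms_def using assms by auto
  then interpret gaussian_noise_model M E eps sigmaz2 sigma2 .
  let ?D = "\<lambda>n \<omega>. \<Sum>i<n. (delta_loo (ztilde Gam (X n) (\<lambda>i k. E n i k \<omega>)) (\<lambda>i. eps n i \<omega>) (lam n) n i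
    - delta_full (ztilde Gam (X n) (\<lambda>i k. E n i k \<omega>)) (\<lambda>i. eps n i \<omega>) (lam n) n i)\<^sup>2"
  have "asymp_almost_surely M (\<lambda>n \<omega>. ?D n \<omega> \<le> \<eta>\<^sup>2)"
    using assms(4,11,14) \<open>\<eta> > 0\<close> by (intro sum_sq_delta_loo_minus_delta_full_ztilde_vanishes) auto
  then have "(\<lambda>n. measure M {\<omega> \<in> space M. \<not> ?D n \<omega> \<le> \<eta>\<^sup>2}) \<longlonglongrightarrow> 0"
    by (intro measure_tendsto_zero_if_asymp_almost_surely) unfold_locales
  moreover have "\<eta> < sqrt s \<longleftrightarrow> \<not> s \<le> \<eta>\<^sup>2" for s
    using \<open>\<eta> > 0\<close> real_sqrt_less_iff[of "\<eta>\<^sup>2" s] by auto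
  ultimately show "(\<lambda>n. measure M {\<omega> \<in> space M. sqrt (?D n \<omega>) > \<eta>}) \<longlonglongrightarrow> 0"
    by simp
qed

end
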